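(* In the setting described in the context, for all $(x_1,L_1),(x_2,L_2),(x_3,L_3)\in\mathcal E_\varphi$ with $x_1,x_2,x_3$ pairwise distinct, $\beta_n(L_1,L_2,L_3)=n\beta_1(x_1,x_2,x_3)$.
   Context: $V$ real symplectic of dimension $2n$, $\mathcal L(V)$ its Lagrangian Grassmannian, $\Gamma<\mathrm{PU}(1,1)$ a torsion-free cocompact lattice acting on $\mathbb S^1=\partial\mathcal D_{1,1}$, $\rho:\Gamma\to\mathrm{Sp}(V)$ a homomorphism, and $\varphi:\mathbb S^1\to\mathcal L(V)$ a $\rho$-equivariant measurable map such that (i) $\beta_n(\varphi(x),\varphi(y),\varphi(z))=n\beta_1(x,y,z)$ for Lebesgue-a.e. $(x,y,z)$, and (ii) for every $L\in\mathcal L(V)$ the set of $x$ with $\varphi(x)\cap L\neq0$ has Lebesgue measure zero. Here $\beta_n(L_1,L_2,L_3)$ is the signature of $(x_1,x_2,x_3)\mapsto\langle x_1,x_2\rangle+\langle x_2,x_3\rangle+\langle x_3,x_1\rangle$ on $L_1\oplus L_2\oplus L_3$, and $\beta_1(x,y,z)=\pm1$ for pairwise distinct positively/negatively cyclically ordered triples in $\mathbb S^1$, $0$ otherwise. The essential graph $\mathcal E_\varphi\subset\mathbb S^1\times\mathcal L(V)$ is the support of the pushforward of Lebesgue measure under $x\mapsto(x,\varphi(x))$. *)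

theory Defs
  imports "HOL-Analysis.Analysis"
begin

type_synonym 'n sympl = "(real^'n) \<times> (real^'n)"

text \<open>Standard symplectic form (every real symplectic space of dim 2n is isomorphic to this).\<close>
definition omega :: "'n::finite sympl \<Rightarrow> 'n sympl \<Rightarrow> real" where
  "omega v w = fst v \<bullet> snd w - snd v \<bullet> fst w"

definition lagrangians :: "'n::finite sympl set set" where
  "lagrangians = {L. subspace L \<and> dim L = CARD('n) \<and> (\<forall>x\<in>L. \<forall>y\<in>L. omega x y = 0)}"

definition Sp :: "('n::finite sympl \<Rightarrow> 'n sympl) set" where
  "Sp = {g. linear g \<and> bij g \<and> (\<forall>v w. omega (g v) (g w) = omega v w)}"

text \<open>Gap distance between subspaces; it induces the usual topology on the Grassmannian.\<close>
definition lagdist :: "'n::finite sympl set \<Rightarrow> 'n sympl set \<Rightarrow> real" where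
  "lagdist L M = max (SUP x\<in>L \<inter> sphere 0 1. infdist x M) (SUP y\<in>M \<inter> sphere 0 1. infdist y L)"

definition lag_open :: "'n::finite sympl set set \<Rightarrow> bool" where
  "lag_open U \<longleftrightarrow> U \<subseteq> lagrangians \<and>
     (\<forall>L\<in>U. \<exists>e>0. \<forall>M\<in>lagrangians. lagdist L M < e \<longrightarrow> M \<in> U)"

definition pos_index :: "('a::euclidean_space \<Rightarrow> real) \<Rightarrow> 'a set \<Rightarrow> nat" where
  "pos_index Q W = Max {dim U | U. subspace U \<and> U \<subseteq> W \<and> (\<forall>x\<in>U. x \<noteq> 0 \<longrightarrow> Q x > 0)}"

definition quad_signature :: "('a::euclidean_space \<Rightarrow> real) \<Rightarrow> 'a set \<Rightarrow> int" where
  "quad_signature Q W = int (pos_index Q W) - int (pos_index (\<lambda>x. - Q x) W)"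

definition maslov :: "'n::finite sympl set \<Rightarrow> 'n sympl set \<Rightarrow> 'n sympl set \<Rightarrow> int" where
  "maslov L1 L2 L3 = quad_signature
     (\<lambda>(x1, x2, x3). omega x1 x2 + omega x2 x3 + omega x3 x1) (L1 \<times> L2 \<times> L3)"

definition ccw :: "complex \<Rightarrow> complex \<Rightarrow> complex \<Rightarrow> bool" where
  "ccw x y z \<longleftrightarrow> (\<exists>t1 t2 t3. t1 < t2 \<and> t2 < t3 \<and> t3 < t1 + 2 * pi \<and>
                     x = cis t1 \<and> y = cis t2 \<and> z = cis t3)"

definition beta1 :: "complex \<Rightarrow> complex \<Rightarrow> complex \<Rightarrow> int" where
  "beta1 x y z = (if x \<noteq> y \<and> y \<noteq> z \<and> x \<noteq> z then
                    (if ccw x y z then 1 else if ccw z y x then -1 else 0) else 0)"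

text \<open>(a,b) stands for the matrix [[a,b],[cnj b, cnj a]] with |a|^2-|b|^2=1.\<close>
definition SU11 :: "(complex \<times> complex) set" where
  "SU11 = {(a, b). (cmod a)\<^sup>2 - (cmod b)\<^sup>2 = 1}"

definition su_mult :: "complex \<times> complex \<Rightarrow> complex \<times> complex \<Rightarrow> complex \<times> complex" where
  "su_mult p q = (fst p * fst q + snd p * cnj (snd q), fst p * snd q + snd p * cnj (fst q))"

definition su_inv :: "complex \<times> complex \<Rightarrow> complex \<times> complex" where
  "su_inv p = (cnj (fst p), - snd p)"

fun su_pow :: "complex \<times> complex \<Rightarrow> nat \<Rightarrow> complex \<times> complex" where
  "su_pow p 0 = (1, 0)"
| "su_pow p (Suc m) = su_mult p (su_pow p m)"

definition mob :: "complex \<times> complex \<Rightarrow> complex \<Rightarrow> complex" where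
  "mob p z = (fst p * z + snd p) / (cnj (snd p) * z + cnj (fst p))"

text \<open>A torsion-free cocompact lattice in PU(1,1), given by its preimage G in SU(1,1)
  (so G contains -1).  A discrete cocompact subgroup is automatically a lattice.\<close>
definition tf_cocompact_lattice :: "(complex \<times> complex) set \<Rightarrow> bool" where
  "tf_cocompact_lattice G \<longleftrightarrow>
     G \<subseteq> SU11 \<and> (1, 0) \<in> G \<and> (-1, 0) \<in> G \<and>
     (\<forall>g\<in>G. \<forall>h\<in>G. su_mult g h \<in> G) \<and> (\<forall>g\<in>G. su_inv g \<in> G) \<and>
     (\<exists>e>0. \<forall>g\<in>G. dist g (1, 0) < e \<longrightarrow> g = (1, 0)) \<and>
     (\<exists>K. compact K \<and> K \<subseteq> SU11 \<and> (\<forall>s\<in>SU11. \<exists>g\<in>G. \<exists>k\<in>K. s = su_mult g k)) \<and>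
     (\<forall>g\<in>G. \<forall>m>0. su_pow g m \<in> {(1, 0), (-1, 0)} \<longrightarrow> g \<in> {(1, 0), (-1, 0)})"

text \<open>Homomorphism Gamma -> Sp(V) (factoring through PU(1,1)).\<close>
definition is_rep :: "(complex \<times> complex) set \<Rightarrow> (complex \<times> complex \<Rightarrow> 'n::finite sympl \<Rightarrow> 'n sympl) \<Rightarrow> bool" where
  "is_rep G \<rho> \<longleftrightarrow> (\<forall>g\<in>G. \<rho> g \<in> Sp) \<and> (\<forall>g\<in>G. \<forall>h\<in>G. \<rho> (su_mult g h) = \<rho> g \<circ> \<rho> h) \<and>
     \<rho> (-1, 0) = id"

definition lag_measurable :: "(complex \<Rightarrow> 'n::finite sympl set) \<Rightarrow> bool" where
  "lag_measurable \<phi> \<longleftrightarrow> (\<forall>x\<in>sphere 0 1. \<phi> x \<in> lagrangians) \<and>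
     (\<forall>U. lag_open U \<longrightarrow> {t \<in> {0..<2*pi}. \<phi> (cis t) \<in> U} \<in> sets lebesgue)"

text \<open>Support of the push-forward of Lebesgue measure under x -> (x, phi x), in S^1 x L(V).\<close>
definition ess_graph :: "(complex \<Rightarrow> 'n::finite sympl set) \<Rightarrow> (complex \<times> 'n sympl set) set" where
  "ess_graph \<phi> = {(x, L). x \<in> sphere 0 1 \<and> L \<in> lagrangians \<and>
     (\<forall>e>0. \<not> (AE t in lebesgue. t \<in> {0..<2*pi} \<longrightarrow>
                 \<not> (dist (cis t) x < e \<and> lagdist (\<phi> (cis t)) L < e)))}"

end

theory Submission
  imports Defs
begin

text \<open>
  For transverse Lagrangians \<open>N\<close>, \<open>C\<close> let \<open>p\<close> be the projection onto \<open>N\<close> along \<open>C\<close> and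
  \<open>h(y) = \<omega>(p y, y)\<close>. By Sylvester's law of inertia, for a Lagrangian \<open>M\<close> transverse to both,
  \<open>h\<close> is negative (positive) definite on \<open>M\<close> if the Maslov index of \<open>(N, C, M)\<close> is \<open>n\<close> (\<open>-n\<close>);
  and for pairwise transverse \<open>L\<^sub>1, L\<^sub>2, L\<^sub>3\<close> the index is \<open>n\<close> iff \<open>\<omega>(x, y) < 0\<close> whenever
  \<open>x \<in> L\<^sub>1\<close>, \<open>y \<in> L\<^sub>2\<close>, \<open>x + y \<in> L\<^sub>3\<close> and \<open>x \<noteq> 0\<close>.

  Given essential points \<open>(x\<^sub>i, L\<^sub>i)\<close> in positive cyclic order, choose generic angles \<open>u\<close>, \<open>c\<^sub>1\<close>,
  \<open>c\<^sub>2\<close> on the arcs \<open>(x\<^sub>3, x\<^sub>1)\<close>, \<open>(x\<^sub>1, x\<^sub>2)\<close>, \<open>(x\<^sub>2, x\<^sub>3)\<close>, put \<open>N = \<phi>(u)\<close>, \<open>C\<^sub>j = \<phi>(c\<^sub>j)\<close>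
  and let \<open>h\<^sub>j\<close> be the form of \<open>(N, C\<^sub>j)\<close>. The a.e. cocycle identity fixes the sign of \<open>h\<^sub>j\<close> on
  \<open>\<phi>(t)\<close> for almost every \<open>t\<close> near each \<open>x\<^sub>i\<close>; by continuity the sign passes, as semidefiniteness,
  to \<open>L\<^sub>i\<close>, and transversality makes it definite. So \<open>h\<^sub>1\<close> is positive on \<open>L\<^sub>1\<close> and negative on
  \<open>L\<^sub>2\<close>, \<open>L\<^sub>3\<close>, and \<open>h\<^sub>2\<close> is positive on \<open>L\<^sub>2\<close> and negative on \<open>L\<^sub>3\<close>; splitting \<open>x \<in> L\<^sub>1\<close> along
  \<open>N \<oplus> L\<^sub>2\<close> turns this into the criterion above, so the index is \<open>n\<close>. The negatively oriented case
  follows by antisymmetry.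
\<close>

section \<open>Symplectic linear algebra\<close>

definition sympl_J :: "'n::finite sympl \<Rightarrow> 'n sympl" where
  "sympl_J v = (- snd v, fst v)"

lemma omega_eq_inner_sympl_J: "omega v w = sympl_J v \<bullet> w"
  by (cases v; cases w) (simp add: omega_def sympl_J_def inner_Pair inner_commute)

lemma linear_sympl_J: "linear sympl_J"
  by (rule linearI) (auto simp: sympl_J_def)

lemma omega_simps [simp]:
  "omega (x + y) z = omega x z + omega y z" "omega z (x + y) = omega z x + omega z y"
  "omega (x - y) z = omega x z - omega y z" "omega z (x - y) = omega z x - omega z y"
  "omega (- x) z = - omega x z" "omega z (- x) = - omega z x"
  "omega (c *\<^sub>R x) z = c * omega x z" "omega z (c *\<^sub>R x) = c * omega z x"
  "omega 0 z = 0" "omega z 0 = 0" "omega x x = 0"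
  by (simp_all add: omega_def inner_add_left inner_add_right inner_diff_left inner_diff_right
      inner_commute algebra_simps)

lemma omega_antisym: "omega x y = - omega y x"
  by (simp add: omega_def inner_commute)

lemma continuous_on_omega [continuous_intros]:
  "continuous_on S f \<Longrightarrow> continuous_on S g \<Longrightarrow> continuous_on S (\<lambda>x. omega (f x) (g x))"
  unfolding omega_def by (intro continuous_intros)

lemma dim_sums_eq:
  fixes S T :: "'a::euclidean_space set"
  assumes "subspace S" "subspace T" "S \<inter> T \<subseteq> {0}"
  shows "dim {x + y |x y. x \<in> S \<and> y \<in> T} = dim S + dim T"
proof -
  have "dim (S \<inter> T) = 0" using assms(3) by (simp add: dim_eq_0)
  with dim_sums_Int[OF assms(1,2)] show ?thesis by (simp only: add_0_right)
qed

lemma dim_add_le_of_Int_0: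
  fixes S T W :: "'a::euclidean_space set"
  assumes "subspace S" "subspace T" "S \<inter> T \<subseteq> {0}" "S \<subseteq> W" "T \<subseteq> W" "subspace W"
  shows "dim S + dim T \<le> dim W"
proof -
  have "{x + y |x y. x \<in> S \<and> y \<in> T} \<subseteq> W" using assms(4-6) subspace_add by blast
  from dim_subset[OF this] show ?thesis unfolding dim_sums_eq[OF assms(1-3)] .
qed

lemma dim_linear_image_eq:
  fixes f :: "'a::euclidean_space \<Rightarrow> 'b::euclidean_space"
  assumes "linear f" "subspace S" "\<And>x. x \<in> S \<Longrightarrow> f x = 0 \<Longrightarrow> x = 0"
  shows "dim (f ` S) = dim S"
proof (rule dim_image_eq[OF assms(1)])
  show "inj_on f (span S)"
    unfolding span_eq_iff[THEN iffD2, OF assms(2)] linear_inj_on_iff_eq_0[OF assms(1,2)]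
    using assms(3) by blast
qed

lemma linear_image_eq_subspace:
  fixes f :: "'a::euclidean_space \<Rightarrow> 'b::euclidean_space"
  assumes "linear f" "subspace S" "subspace T" "f ` S \<subseteq> T" "dim T \<le> dim S"
    and "\<And>x. x \<in> S \<Longrightarrow> f x = 0 \<Longrightarrow> x = 0"
  shows "f ` S = T"
proof (rule subspace_dim_equal[OF linear_subspace_image[OF assms(1,2)] assms(3,4)])
  show "dim T \<le> dim (f ` S)" using dim_linear_image_eq[OF assms(1,2,6)] assms(5) by simp
qed

lemma isotropic_dim_le:
  fixes W :: "'n::finite sympl set"
  assumes W: "subspace W" and iso: "\<forall>x\<in>W. \<forall>y\<in>W. omega x y = 0"
  shows "dim W \<le> CARD('n)"
proof -
  have "W \<inter> sympl_J ` W \<subseteq> {0}"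
  proof
    fix z assume z: "z \<in> W \<inter> sympl_J ` W"
    then obtain x where "x \<in> W" "z = sympl_J x" by auto
    then have "z \<bullet> z = 0" using iso z by (simp add: omega_eq_inner_sympl_J)
    then show "z \<in> {0}" by simp
  qed
  then have "dim W + dim (sympl_J ` W) \<le> dim (UNIV :: 'n sympl set)"
    by (intro dim_add_le_of_Int_0 W linear_subspace_image[OF linear_sympl_J]) auto
  moreover have "dim (sympl_J ` W) = dim W"
    by (intro dim_linear_image_eq[OF linear_sympl_J W]) (simp add: sympl_J_def prod_eq_iff)
  ultimately show ?thesis by (simp add: dim_UNIV)
qed

lemma lagrangianD:
  fixes L :: "'n::finite sympl set"
  assumes "L \<in> lagrangians"
  shows lagrangian_subspace: "subspace L"
    and lagrangian_dim: "dim L = CARD('n)"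
    and lagrangian_isotropic: "x \<in> L \<Longrightarrow> y \<in> L \<Longrightarrow> omega x y = 0"
    and lagrangian_0: "0 \<in> L"
  using assms subspace_0 by (auto simp: lagrangians_def)

lemma lagrangian_maximal:
  fixes L :: "'n::finite sympl set"
  assumes L: "L \<in> lagrangians" and z: "\<forall>y\<in>L. omega z y = 0"
  shows "z \<in> L"
proof -
  let ?W = "span (insert z L)"
  have spL: "span L = L" using lagrangian_subspace[OF L] by (simp add: span_eq_iff)
  have "omega x y = 0" if xy: "x \<in> ?W" "y \<in> ?W" for x y
  proof -
    obtain k k' where "x - k *\<^sub>R z \<in> L" "y - k' *\<^sub>R z \<in> L"
      using xy span_insert[of z L] spL by auto
    then obtain a b where ab: "a \<in> L" "b \<in> L" "x = a + k *\<^sub>R z" "y = b + k' *\<^sub>R z"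
      by (intro that[of "x - k *\<^sub>R z" "y - k' *\<^sub>R z"]) auto
    have "omega z a = 0" "omega z b = 0" using z ab by auto
    then show ?thesis
      using lagrangian_isotropic[OF L ab(1,2)] omega_antisym[of a z] by (simp add: ab)
  qed
  then have "dim ?W \<le> dim L"
    using isotropic_dim_le[of ?W] lagrangian_dim[OF L] by simp
  moreover have "L \<subseteq> ?W" by (meson span_superset subset_insertI subset_trans)
  ultimately have "L = ?W"
    using subspace_dim_equal[OF lagrangian_subspace[OF L] subspace_span] by blast
  then show ?thesis by (metis insertI1 span_base)
qed

lemma transverse_lagrangians_sum:
  fixes A B :: "'n::finite sympl set"
  assumes A: "A \<in> lagrangians" and B: "B \<in> lagrangians" and AB: "A \<inter> B = {0}"
  shows "\<exists>a\<in>A. \<exists>b\<in>B. z = a + b"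
proof -
  let ?S = "{x + y |x y. x \<in> A \<and> y \<in> B}"
  have "dim ?S = dim (UNIV :: 'n sympl set)"
    using dim_sums_eq[OF lagrangian_subspace[OF A] lagrangian_subspace[OF B]] AB
      lagrangian_dim[OF A] lagrangian_dim[OF B] by (simp add: dim_UNIV)
  then have "?S = UNIV"
    using subspace_dim_equal[OF subspace_sums[OF lagrangian_subspace[OF A] lagrangian_subspace[OF B]]
        subspace_UNIV subset_UNIV] by simp
  then show ?thesis by blast
qed

section \<open>Indices of quadratic forms\<close>

lemma pos_index_finite:
  fixes W :: "'a::euclidean_space set"
  shows "finite {dim U | U. subspace U \<and> U \<subseteq> W \<and> (\<forall>x\<in>U. x \<noteq> 0 \<longrightarrow> Q x > 0)}"
  by (rule finite_subset[of _ "{..DIM('a)}"]) (auto simp: dim_subset_UNIV[unfolded dim_UNIV])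

lemma pos_index_ge:
  fixes Q :: "'a::euclidean_space \<Rightarrow> real"
  assumes "subspace U" "U \<subseteq> W" "\<forall>x\<in>U. x \<noteq> 0 \<longrightarrow> Q x > 0"
  shows "dim U \<le> pos_index Q W"
  unfolding pos_index_def by (rule Max_ge[OF pos_index_finite]) (use assms in blast)

lemma pos_index_le:
  fixes Q :: "'a::euclidean_space \<Rightarrow> real"
  assumes "0 \<in> W"
    and "\<And>U. subspace U \<Longrightarrow> U \<subseteq> W \<Longrightarrow> \<forall>x\<in>U. x \<noteq> 0 \<longrightarrow> Q x > 0 \<Longrightarrow> dim U \<le> k"
  shows "pos_index Q W \<le> k"
  unfolding pos_index_def
proof (rule Max.boundedI[OF pos_index_finite])
  show "{dim U | U. subspace U \<and> U \<subseteq> W \<and> (\<forall>x\<in>U. x \<noteq> 0 \<longrightarrow> Q x > 0)} \<noteq> {}"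
    using assms(1) subspace_single_0 by blast
qed (use assms(2) in blast)

lemma pos_index_attained:
  fixes Q :: "'a::euclidean_space \<Rightarrow> real"
  assumes "0 \<in> W"
  obtains U where "subspace U" "U \<subseteq> W" "\<forall>x\<in>U. x \<noteq> 0 \<longrightarrow> Q x > 0" "dim U = pos_index Q W"
proof -
  have "{dim U | U. subspace U \<and> U \<subseteq> W \<and> (\<forall>x\<in>U. x \<noteq> 0 \<longrightarrow> Q x > 0)} \<noteq> {}"
    using assms subspace_single_0 by blast
  from Max_in[OF pos_index_finite this] obtain U where
    "subspace U" "U \<subseteq> W" "\<forall>x\<in>U. x \<noteq> 0 \<longrightarrow> Q x > 0" "dim U = pos_index Q W"
    unfolding pos_index_def by auto
  then show ?thesis by (rule that)
qed

lemma quad_signature_eqI: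
  fixes Q :: "'a::euclidean_space \<Rightarrow> real"
  assumes W: "subspace W" and U: "subspace U" "U \<subseteq> W" "\<forall>x\<in>U. x \<noteq> 0 \<longrightarrow> Q x > 0"
    and V: "subspace V" "V \<subseteq> W" "\<forall>x\<in>V. x \<noteq> 0 \<longrightarrow> Q x < 0"
    and dim: "dim U + dim V = dim W"
  shows "quad_signature Q W = int (dim U) - int (dim V)"
proof -
  have index_eq: "pos_index Q' W = dim U'"
    if "subspace U'" "U' \<subseteq> W" "\<forall>x\<in>U'. x \<noteq> 0 \<longrightarrow> Q' x > 0"
      "subspace V'" "V' \<subseteq> W" "\<forall>x\<in>V'. x \<noteq> 0 \<longrightarrow> Q' x < 0" "dim U' + dim V' = dim W"
    for Q' :: "'a \<Rightarrow> real" and U' V'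
  proof (rule antisym)
    show "pos_index Q' W \<le> dim U'"
    proof (rule pos_index_le[OF subspace_0[OF W]])
      fix P assume P: "subspace P" "P \<subseteq> W" "\<forall>x\<in>P. x \<noteq> 0 \<longrightarrow> Q' x > 0"
      have "P \<inter> V' \<subseteq> {0}" using P(3) that(6) by force
      then show "dim P \<le> dim U'"
        using dim_add_le_of_Int_0[OF P(1) that(4) _ P(2) that(5) W] that(7) by simp
    qed
  qed (rule pos_index_ge[OF that(1-3)])
  have "pos_index Q W = dim U" by (rule index_eq[OF U V dim])
  moreover have "pos_index (\<lambda>x. - Q x) W = dim V"
    by (rule index_eq) (use U V dim in auto)
  ultimately show ?thesis by (simp add: quad_signature_def)
qed

lemma pos_index_compose_le:
  fixes f :: "'a::euclidean_space \<Rightarrow> 'b::euclidean_space"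
  assumes f: "linear f" "inj f" and W: "0 \<in> W"
  shows "pos_index (\<lambda>x. Q (f x)) W \<le> pos_index Q (f ` W)"
proof (rule pos_index_le[OF W])
  fix U assume U: "subspace U" "U \<subseteq> W" "\<forall>x\<in>U. x \<noteq> 0 \<longrightarrow> Q (f x) > 0"
  have "\<forall>y\<in>f ` U. y \<noteq> 0 \<longrightarrow> Q y > 0" using U(3) linear_0[OF f(1)] by auto
  then have "dim (f ` U) \<le> pos_index Q (f ` W)"
    using U(2) by (intro pos_index_ge linear_subspace_image[OF f(1) U(1)]) auto
  moreover have "dim (f ` U) = dim U"
    using dim_image_eq[OF f(1)] f(2) by (simp add: inj_on_subset)
  ultimately show "dim U \<le> pos_index Q (f ` W)" by simp
qed

lemma pos_index_compose_involution:
  fixes f :: "'a::euclidean_space \<Rightarrow> 'a"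
  assumes f: "linear f" "\<And>x. f (f x) = x" and W: "0 \<in> W"
  shows "pos_index (\<lambda>x. Q (f x)) W = pos_index Q (f ` W)"
proof (rule antisym)
  have inj: "inj f" by (rule inj_on_inverseI[of _ f]) (rule f(2))
  show "pos_index (\<lambda>x. Q (f x)) W \<le> pos_index Q (f ` W)"
    by (rule pos_index_compose_le[OF f(1) inj W])
  have "0 \<in> f ` W" using W linear_0[OF f(1)] by (metis image_eqI)
  from pos_index_compose_le[OF f(1) inj this, of "\<lambda>x. Q (f x)"]
  show "pos_index Q (f ` W) \<le> pos_index (\<lambda>x. Q (f x)) W"
    by (simp add: f(2) image_image)
qed

lemma quadratic_nonneg_imp_linear_coeff_0:
  fixes b c :: real
  assumes "\<And>t. 0 \<le> t * b + t * t * c"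
  shows "b = 0"
proof (rule ccontr)
  assume b: "b \<noteq> 0"
  define d where "d = \<bar>c\<bar> + 1"
  have d: "d > 0" "c < d" by (auto simp: d_def)
  have "d * d * ((- b / d) * b + (- b / d) * (- b / d) * c) = b * b * (c - d)"
    using d by (simp add: field_simps)
  also have "\<dots> < 0"
    using b d by (intro mult_pos_neg) (auto simp: zero_less_mult_iff linorder_neq_iff)
  finally show False using assms[of "- b / d"] d by (simp add: mult_less_0_iff)
qed

lemma psd_null_vector:
  fixes \<beta> :: "'a::real_vector \<Rightarrow> 'a \<Rightarrow> real"
  assumes \<beta>: "bilinear \<beta>" and Y: "subspace Y" "\<forall>y\<in>Y. 0 \<le> \<beta> y y"
    and x: "x \<in> Y" "\<beta> x x = 0" and y: "y \<in> Y"
  shows "\<beta> x y + \<beta> y x = 0"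
proof (rule quadratic_nonneg_imp_linear_coeff_0)
  fix t
  have "x + t *\<^sub>R y \<in> Y" using Y(1) x(1) y by (simp add: subspace_add subspace_scale)
  then have "0 \<le> \<beta> (x + t *\<^sub>R y) (x + t *\<^sub>R y)" using Y(2) by blast
  also have "\<dots> = t * (\<beta> x y + \<beta> y x) + t * t * \<beta> y y"
    by (simp add: bilinear_ladd[OF \<beta>] bilinear_radd[OF \<beta>] bilinear_lmul[OF \<beta>]
        bilinear_rmul[OF \<beta>] x(2) algebra_simps)
  finally show "0 \<le> t * (\<beta> x y + \<beta> y x) + t * t * \<beta> y y" .
qed

lemma dim_le_add_dim_orthogonal_within:
  fixes \<beta> :: "'a::euclidean_space \<Rightarrow> 'a \<Rightarrow> real"
  assumes \<beta>: "bilinear \<beta>" and A: "subspace A" and X: "subspace X"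
  shows "dim A \<le> dim X + dim {y \<in> A. \<forall>x\<in>X. \<beta> x y = 0}"
proof -
  define S where "S x = (\<Sum>i\<in>Basis. \<beta> x i *\<^sub>R i)" for x
  have S: "linear S"
    unfolding S_def by (rule linearI)
      (simp_all add: bilinear_ladd[OF \<beta>] bilinear_lmul[OF \<beta>] scaleR_add_left sum.distrib
        scaleR_sum_right)
  have inner_S: "S x \<bullet> y = \<beta> x y" for x y
  proof -
    have "S x \<bullet> y = (\<Sum>i\<in>Basis. \<beta> x i * (i \<bullet> y))" by (simp add: S_def inner_sum_left)
    also have "\<dots> = \<beta> x (\<Sum>i\<in>Basis. (y \<bullet> i) *\<^sub>R i)"
      using \<beta> by (simp add: bilinear_def linear_sum linear_scale inner_commute mult.commute)
    finally show ?thesis by (simp add: euclidean_representation)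
  qed
  let ?O = "{y. \<forall>z\<in>S ` X. orthogonal z y}"
  have O: "subspace ?O" by (rule subspace_orthogonal_to_vectors)
  have Y_eq: "{y \<in> A. \<forall>x\<in>X. \<beta> x y = 0} = A \<inter> ?O"
    by (auto simp: orthogonal_def inner_S)
  have "dim ?O + dim (S ` X) = DIM('a)"
    using dim_subspace_orthogonal_to_vectors[of "S ` X" UNIV] linear_subspace_image[OF S X]
    by (simp add: dim_UNIV)
  moreover have "dim A + dim ?O \<le> DIM('a) + dim (A \<inter> ?O)"
    using dim_sums_Int[OF A O] dim_subset_UNIV[of "{x + y |x y. x \<in> A \<and> y \<in> ?O}"] by linarith
  moreover have "dim (S ` X) \<le> dim X" by (rule dim_image_le[OF S])
  ultimately show ?thesis unfolding Y_eq by linarith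
qed

lemma maximal_negative_orthogonal_nonneg:
  fixes \<beta> :: "'a::euclidean_space \<Rightarrow> 'a \<Rightarrow> real"
  assumes \<beta>: "bilinear \<beta>" and sym: "\<And>x y. x \<in> A \<Longrightarrow> y \<in> A \<Longrightarrow> \<beta> x y = \<beta> y x"
    and A: "subspace A" and X: "subspace X" "X \<subseteq> A" "\<forall>x\<in>X. x \<noteq> 0 \<longrightarrow> \<beta> x x < 0"
    and max: "\<And>U. subspace U \<Longrightarrow> U \<subseteq> A \<Longrightarrow> \<forall>x\<in>U. x \<noteq> 0 \<longrightarrow> \<beta> x x < 0 \<Longrightarrow> dim U \<le> dim X"
    and y: "y \<in> A" "\<forall>x\<in>X. \<beta> x y = 0"
  shows "0 \<le> \<beta> y y"
proof (rule ccontr)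
  assume neg: "\<not> 0 \<le> \<beta> y y"
  let ?U = "span (insert y X)"
  have spX: "span X = X" using X(1) by (simp add: span_eq_iff)
  have "y \<notin> X" using y(2) neg by auto
  then have "dim ?U = dim X + 1" using dim_insert[of y X] spX by simp
  moreover have "?U \<subseteq> A" using X(2) y(1) A by (simp add: span_minimal)
  moreover have "\<beta> u u < 0" if u: "u \<in> ?U" "u \<noteq> 0" for u
  proof -
    obtain k where "u - k *\<^sub>R y \<in> X" using u(1) span_insert[of y X] spX by auto
    then obtain x where x: "x \<in> X" "u = x + k *\<^sub>R y" by (metis diff_add_cancel)
    have "\<beta> x y = 0" "\<beta> y x = 0" using x(1) y X(2) sym[of x y] by auto
    then have "\<beta> u u = \<beta> x x + k * k * \<beta> y y"
      by (simp add: x(2) bilinear_ladd[OF \<beta>] bilinear_radd[OF \<beta>] bilinear_lmul[OF \<beta>]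
          bilinear_rmul[OF \<beta>])
    moreover have "k * k * \<beta> y y \<le> 0" using neg by (simp add: mult_nonneg_nonpos)
    moreover have "k * k * \<beta> y y < 0" if "k \<noteq> 0"
      using neg that by (intro mult_pos_neg) (auto simp: zero_less_mult_iff linorder_neq_iff)
    moreover have "x \<noteq> 0 \<Longrightarrow> \<beta> x x < 0" using X(3) x(1) by blast
    moreover have "\<beta> 0 0 = 0" by (rule bilinear_lzero[OF \<beta>])
    ultimately show ?thesis using u(2) x(2) by (cases "x = 0"; cases "k = 0") auto
  qed
  ultimately show False using max[OF subspace_span] by fastforce
qed

lemma psd_orthogonal_summand_pos:
  fixes \<beta> :: "'a::euclidean_space \<Rightarrow> 'a \<Rightarrow> real"
  assumes \<beta>: "bilinear \<beta>" and sym: "\<And>x y. x \<in> A \<Longrightarrow> y \<in> A \<Longrightarrow> \<beta> x y = \<beta> y x"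
    and nondeg: "\<And>y. y \<in> A \<Longrightarrow> \<forall>x\<in>A. \<beta> x y = 0 \<Longrightarrow> y = 0"
    and Y: "subspace Y" "Y \<subseteq> A" and Y_nonneg: "\<forall>y\<in>Y. 0 \<le> \<beta> y y"
    and sum: "{x + y |x y. x \<in> X \<and> y \<in> Y} = A" and orth: "\<forall>x\<in>X. \<forall>y\<in>Y. \<beta> x y = 0"
    and y: "y \<in> Y" "y \<noteq> 0"
  shows "\<beta> y y > 0"
proof (rule ccontr)
  assume "\<not> \<beta> y y > 0"
  then have null: "\<beta> y y = 0" using Y_nonneg y(1) by force
  have "\<beta> a y = 0" if "a \<in> A" for a
  proof -
    have "a \<in> {x + y |x y. x \<in> X \<and> y \<in> Y}" using \<open>a \<in> A\<close> sum by simp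
    then obtain x y' where a: "a = x + y'" "x \<in> X" "y' \<in> Y" by blast
    have "\<beta> y y' + \<beta> y' y = 0" by (rule psd_null_vector[OF \<beta> Y(1) Y_nonneg y(1) null a(3)])
    moreover have "\<beta> y y' = \<beta> y' y" using sym y(1) a(3) Y(2) by auto
    moreover have "\<beta> x y = 0" using orth y(1) a(2) by blast
    ultimately show ?thesis by (simp add: a(1) bilinear_ladd[OF \<beta>])
  qed
  then show False using nondeg y Y(2) by blast
qed

lemma sylvester_decomposition:
  fixes \<beta> :: "'a::euclidean_space \<Rightarrow> 'a \<Rightarrow> real"
  assumes \<beta>: "bilinear \<beta>" and A: "subspace A"
    and sym: "\<And>x y. x \<in> A \<Longrightarrow> y \<in> A \<Longrightarrow> \<beta> x y = \<beta> y x"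
    and nondeg: "\<And>y. y \<in> A \<Longrightarrow> \<forall>x\<in>A. \<beta> x y = 0 \<Longrightarrow> y = 0"
  obtains X Y where "subspace X" "X \<subseteq> A" "\<forall>x\<in>X. x \<noteq> 0 \<longrightarrow> \<beta> x x < 0"
    and "subspace Y" "Y \<subseteq> A" "\<forall>y\<in>Y. y \<noteq> 0 \<longrightarrow> \<beta> y y > 0"
    and "dim X + dim Y = dim A"
proof -
  obtain X where X: "subspace X" "X \<subseteq> A" "\<forall>x\<in>X. x \<noteq> 0 \<longrightarrow> - \<beta> x x > 0"
    and dim_X: "dim X = pos_index (\<lambda>x. - \<beta> x x) A"
    by (rule pos_index_attained[OF subspace_0[OF A]])
  have X_neg: "\<forall>x\<in>X. x \<noteq> 0 \<longrightarrow> \<beta> x x < 0" using X(3) by auto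
  have max: "dim U \<le> dim X" if "subspace U" "U \<subseteq> A" "\<forall>x\<in>U. x \<noteq> 0 \<longrightarrow> \<beta> x x < 0" for U
    using pos_index_ge[of U A "\<lambda>x. - \<beta> x x"] that dim_X by simp
  define Y where "Y = {y \<in> A. \<forall>x\<in>X. \<beta> x y = 0}"
  have Y: "subspace Y" "Y \<subseteq> A"
    unfolding Y_def subspace_def using subspace_0[OF A] subspace_add[OF A] subspace_scale[OF A]
    by (simp_all add: bilinear_radd[OF \<beta>] bilinear_rmul[OF \<beta>] bilinear_rzero[OF \<beta>])
  have Y_nonneg: "0 \<le> \<beta> y y" if "y \<in> Y" for y
    using that unfolding Y_def
    by (intro maximal_negative_orthogonal_nonneg[OF \<beta> sym A X(1,2) X_neg max]) auto
  have XY: "X \<inter> Y \<subseteq> {0}"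
  proof
    fix z assume "z \<in> X \<inter> Y"
    then have "z \<in> X" "\<beta> z z = 0" by (auto simp: Y_def)
    then show "z \<in> {0}" using X_neg by fastforce
  qed
  have dim_XY: "dim X + dim Y = dim A"
    using dim_le_add_dim_orthogonal_within[OF \<beta> A X(1)] dim_add_le_of_Int_0[OF X(1) Y(1) XY X(2) Y(2) A]
    by (simp add: Y_def)
  have "{x + y |x y. x \<in> X \<and> y \<in> Y} \<subseteq> A" using X(2) Y(2) A subspace_add by blast
  then have sum_XY: "{x + y |x y. x \<in> X \<and> y \<in> Y} = A"
    using subspace_dim_equal[OF subspace_sums[OF X(1) Y(1)] A] dim_sums_eq[OF X(1) Y(1) XY] dim_XY
    by simp
  have "\<forall>x\<in>X. \<forall>y\<in>Y. \<beta> x y = 0" by (simp add: Y_def)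
  then have "\<beta> y y > 0" if "y \<in> Y" "y \<noteq> 0" for y
    using psd_orthogonal_summand_pos[OF \<beta> sym nondeg Y] Y_nonneg sum_XY that by blast
  with that[OF X(1,2) X_neg Y] dim_XY show ?thesis by blast
qed

section \<open>The Maslov index of a transverse triple\<close>

lemma Pair_eq_0_iff [simp]: "(a, b) = 0 \<longleftrightarrow> a = 0 \<and> b = 0"
  by (simp add: zero_prod_def)

definition complementary :: "'a::real_vector set \<Rightarrow> 'a set \<Rightarrow> bool" where
  "complementary A B \<longleftrightarrow>
     subspace A \<and> subspace B \<and> A \<inter> B \<subseteq> {0} \<and> (\<forall>z. \<exists>a\<in>A. \<exists>b\<in>B. z = a + b)"

definition proj_along :: "'a::real_vector set \<Rightarrow> 'a set \<Rightarrow> 'a \<Rightarrow> 'a" where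
  "proj_along A B z = (SOME a. a \<in> A \<and> z - a \<in> B)"

lemma proj_along_mem:
  assumes "complementary A B"
  shows "proj_along A B z \<in> A" "z - proj_along A B z \<in> B"
proof -
  from assms obtain a b where "a \<in> A" "b \<in> B" "z = a + b" unfolding complementary_def by blast
  then have "\<exists>a. a \<in> A \<and> z - a \<in> B" by auto
  from someI_ex[OF this] show "proj_along A B z \<in> A" "z - proj_along A B z \<in> B"
    unfolding proj_along_def by auto
qed

lemma proj_along_unique:
  assumes c: "complementary A B" and a: "a \<in> A" "z - a \<in> B"
  shows "proj_along A B z = a"
proof -
  have A: "subspace A" and B: "subspace B" and AB: "A \<inter> B \<subseteq> {0}"
    using c by (auto simp: complementary_def)
  have "proj_along A B z - a \<in> A" using proj_along_mem(1)[OF c] a(1) A by (simp add: subspace_diff)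
  moreover have "proj_along A B z - a = (z - a) - (z - proj_along A B z)" by simp
  then have "proj_along A B z - a \<in> B" using proj_along_mem(2)[OF c] a(2) B by (metis subspace_diff)
  ultimately show ?thesis using AB by auto
qed

lemma linear_proj_along:
  assumes c: "complementary A B"
  shows "linear (proj_along A B)"
proof -
  have A: "subspace A" and B: "subspace B" using c by (auto simp: complementary_def)
  note mem = proj_along_mem[OF c]
  show ?thesis
  proof (rule linearI)
    fix x y
    have "x + y - (proj_along A B x + proj_along A B y) \<in> B"
      using subspace_add[OF B mem(2)[of x] mem(2)[of y]] by (simp add: algebra_simps)
    moreover have "proj_along A B x + proj_along A B y \<in> A" using mem A by (simp add: subspace_add)
    ultimately show "proj_along A B (x + y) = proj_along A B x + proj_along A B y"
      by (intro proj_along_unique[OF c])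
  next
    fix r x
    have "r *\<^sub>R x - r *\<^sub>R proj_along A B x \<in> B"
      using subspace_scale[OF B mem(2)[of x], of r] by (simp add: algebra_simps)
    moreover have "r *\<^sub>R proj_along A B x \<in> A" using mem A by (simp add: subspace_scale)
    ultimately show "proj_along A B (r *\<^sub>R x) = r *\<^sub>R proj_along A B x"
      by (intro proj_along_unique[OF c])
  qed
qed

lemma complementary_lagrangians:
  fixes A B :: "'n::finite sympl set"
  assumes "A \<in> lagrangians" "B \<in> lagrangians" "A \<inter> B = {0}"
  shows "complementary A B"
  using assms transverse_lagrangians_sum lagrangian_subspace unfolding complementary_def by blast

text \<open>Over pairwise transverse Lagrangians, \<open>C\<close> is the graph of a map \<open>T : A \<rightarrow> B\<close>, and
  \<open>negative_triple A B C\<close> says that the quadratic form \<open>x \<mapsto> \<omega>(x, T x)\<close> on \<open>A\<close> is negative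
  definite; this is the case of maximal Maslov index.\<close>
definition negative_triple :: "'n::finite sympl set \<Rightarrow> 'n sympl set \<Rightarrow> 'n sympl set \<Rightarrow> bool" where
  "negative_triple A B C \<longleftrightarrow> (\<forall>x\<in>A. \<forall>y\<in>B. x + y \<in> C \<longrightarrow> x \<noteq> 0 \<longrightarrow> omega x y < 0)"

definition maslov_form :: "'n::finite sympl \<times> 'n sympl \<times> 'n sympl \<Rightarrow> real" where
  "maslov_form = (\<lambda>(x1, x2, x3). omega x1 x2 + omega x2 x3 + omega x3 x1)"

lemma maslov_eq_quad_signature: "maslov L1 L2 L3 = quad_signature maslov_form (L1 \<times> L2 \<times> L3)"
  by (simp add: maslov_def maslov_form_def)

lemma maslov_antisym:
  fixes L1 L2 L3 :: "'n::finite sympl set"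
  shows "maslov L3 L2 L1 = - maslov L1 L2 L3"
proof (cases "0 \<in> L1 \<times> L2 \<times> L3")
  case True
  define r where "r = (\<lambda>(a, b, c). (c, b, a) :: 'n sympl \<times> 'n sympl \<times> 'n sympl)"
  have r: "linear r" "\<And>p. r (r p) = p" by (auto simp: r_def intro!: linearI)
  have img: "r ` (L1 \<times> L2 \<times> L3) = L3 \<times> L2 \<times> L1" by (auto simp: r_def image_iff)
  have Q_r: "maslov_form (r p) = - maslov_form p" for p
  proof -
    obtain a b c where "p = (a, b, c)" by (rule prod_cases3)
    then show ?thesis using omega_antisym[of a b] omega_antisym[of b c] omega_antisym[of c a]
      by (simp add: r_def maslov_form_def)
  qed
  have "pos_index (\<lambda>p. F (r p)) (L1 \<times> L2 \<times> L3) = pos_index F (L3 \<times> L2 \<times> L1)" for F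
    using pos_index_compose_involution[OF r True] img by simp
  from this[of maslov_form] this[of "\<lambda>p. - maslov_form p"] show ?thesis
    by (simp add: maslov_eq_quad_signature quad_signature_def Q_r)
next
  case False
  then have "0 \<notin> L3 \<times> L2 \<times> L1" by (auto simp: mem_Times_iff)
  have no_subspace: "pos_index F W = Max {}" if "0 \<notin> W" for F and W :: "('n sympl \<times> 'n sympl \<times> 'n sympl) set"
  proof -
    have "{dim U | U. subspace U \<and> U \<subseteq> W \<and> (\<forall>x\<in>U. x \<noteq> 0 \<longrightarrow> F x > 0)} = {}"
      using that by (auto dest: subspace_0)
    then show ?thesis unfolding pos_index_def by (rule arg_cong)
  qed
  show ?thesis
    using no_subspace[OF False] no_subspace[OF \<open>0 \<notin> L3 \<times> L2 \<times> L1\<close>]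
    by (simp add: maslov_def quad_signature_def)
qed

lemma transverse_graph_map:
  fixes B C :: "'n::finite sympl set"
  assumes B: "B \<in> lagrangians" and C: "C \<in> lagrangians" and BC: "B \<inter> C = {0}"
  obtains T where "linear T" "\<And>x. T x \<in> B" "\<And>x. x + T x \<in> C"
    and "\<And>x y. y \<in> B \<Longrightarrow> x + y \<in> C \<Longrightarrow> y = T x"
proof -
  have c: "complementary B C" by (rule complementary_lagrangians[OF B C BC])
  note B_sub = lagrangian_subspace[OF B]
  show ?thesis
  proof (rule that[of "\<lambda>x. - proj_along B C x"])
    show "linear (\<lambda>x. - proj_along B C x)" by (intro linear_compose_neg linear_proj_along c)
    show "- proj_along B C x \<in> B" for x using proj_along_mem(1)[OF c] B_sub by (simp add: subspace_neg)
    show "x + - proj_along B C x \<in> C" for x using proj_along_mem(2)[OF c] by simp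
    show "y = - proj_along B C x" if "y \<in> B" "x + y \<in> C" for x y
      using proj_along_unique[OF c, of "- y" x] that B_sub by (simp add: subspace_neg)
  qed
qed

context
  fixes A B C :: "'n::finite sympl set" and T :: "'n sympl \<Rightarrow> 'n sympl"
  assumes A: "A \<in> lagrangians" and B: "B \<in> lagrangians" and C: "C \<in> lagrangians"
    and AB: "A \<inter> B = {0}" and AC: "A \<inter> C = {0}"
    and T: "linear T" "\<And>x. T x \<in> B" "\<And>x. x + T x \<in> C"
begin

lemma omega_graph_sym: "u \<in> A \<Longrightarrow> v \<in> A \<Longrightarrow> omega u (T v) = omega v (T u)"
  using lagrangian_isotropic[OF C T(3) T(3), of u v] lagrangian_isotropic[OF A, of u v]
    lagrangian_isotropic[OF B T(2) T(2), of u v] omega_antisym[of "T u" v]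
  by (simp add: linear_add[OF T(1)])

lemma graph_map_image: "T ` A = B"
proof (rule linear_image_eq_subspace[OF T(1)])
  show "dim B \<le> dim A" using lagrangian_dim[OF A] lagrangian_dim[OF B] by simp
  show "x = 0" if "x \<in> A" "T x = 0" for x using that T(3)[of x] AC by auto
qed (use T(2) lagrangian_subspace[OF A] lagrangian_subspace[OF B] in auto)

text \<open>The parametrisation of \<open>A \<times> B \<times> C\<close> by \<open>A\<^sup>3\<close> in which the Maslov form becomes
  \<open>\<beta>(a, a) - \<beta>(b, b) - \<beta>(c, c)\<close>, where \<open>\<beta>(u, v) = \<omega>(u, T v)\<close>.\<close>
definition graph_param :: "'n sympl \<times> 'n sympl \<times> 'n sympl \<Rightarrow> 'n sympl \<times> 'n sympl \<times> 'n sympl" where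
  "graph_param p = (let (a, b, c) = p in (a + b + c, T (a - b + c), c + T c))"

lemma graph_param_simp [simp]: "graph_param (a, b, c) = (a + b + c, T (a - b + c), c + T c)"
  by (simp add: graph_param_def)

lemma linear_graph_param: "linear graph_param"
proof (rule linearI)
  fix p q :: "'n sympl \<times> 'n sympl \<times> 'n sympl" and r :: real
  obtain a b c a' b' c' where "p = (a, b, c)" "q = (a', b', c')" by (metis prod_cases3)
  then show "graph_param (p + q) = graph_param p + graph_param q"
      "graph_param (r *\<^sub>R p) = r *\<^sub>R graph_param p"
    by (simp_all add: linear_add[OF T(1)] linear_diff[OF T(1)] linear_scale[OF T(1)] algebra_simps)
qed

lemma graph_param_mem: "a \<in> A \<Longrightarrow> b \<in> A \<Longrightarrow> c \<in> A \<Longrightarrow> graph_param (a, b, c) \<in> A \<times> B \<times> C"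
  using lagrangian_subspace[OF A] T(2,3) by (simp add: subspace_add subspace_diff)

lemma graph_param_eq_0:
  assumes "a \<in> A" "b \<in> A" "c \<in> A" "graph_param (a, b, c) = 0"
  shows "a = 0 \<and> b = 0 \<and> c = 0"
proof -
  have sum: "a + b + c = 0" and "T (a - b + c) = 0" "c + T c = 0"
    using assms(4) by (auto simp: zero_prod_def)
  have "a - b + c \<in> C" using T(3)[of "a - b + c"] \<open>T (a - b + c) = 0\<close> by simp
  moreover have "a - b + c \<in> A" using assms(1-3) lagrangian_subspace[OF A] by (simp add: subspace_add subspace_diff)
  ultimately have diff: "a - b + c = 0" using AC by auto
  have "c = - T c" using \<open>c + T c = 0\<close> by (simp add: eq_neg_iff_add_eq_0)
  then have "c \<in> B" using T(2)[of c] lagrangian_subspace[OF B] by (metis subspace_neg)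
  then have "c = 0" using assms(3) AB by auto
  then have ab: "a + b = 0" "a - b = 0" using sum diff by simp_all
  have "2 *\<^sub>R a = (a + b) + (a - b)" by (simp add: scaleR_2)
  then have "a = 0" using ab by simp
  with ab \<open>c = 0\<close> show ?thesis by simp
qed

lemma maslov_form_graph_param:
  assumes "a \<in> A" "b \<in> A" "c \<in> A"
  shows "maslov_form (graph_param (a, b, c)) = omega a (T a) - omega b (T b) - omega c (T c)"
proof -
  have iso: "omega u v = 0" if "u \<in> A" "v \<in> A" for u v by (rule lagrangian_isotropic[OF A that])
  have T_left: "omega (T x) u = - omega u (T x)" if "u \<in> A" for x u by (rule omega_antisym)
  have "omega (T u) (T v) = 0" for u v by (rule lagrangian_isotropic[OF B T(2) T(2)])
  with assms show ?thesis
    by (simp add: maslov_form_def linear_add[OF T(1)] linear_diff[OF T(1)]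
        T_left iso omega_graph_sym[of b a] omega_graph_sym[of c a] omega_graph_sym[of c b])
qed

lemma graph_param_image:
  assumes "subspace U" "subspace V" "subspace W" "U \<subseteq> A" "V \<subseteq> A" "W \<subseteq> A"
  shows "subspace (graph_param ` (U \<times> V \<times> W))" "graph_param ` (U \<times> V \<times> W) \<subseteq> A \<times> B \<times> C"
    and "dim (graph_param ` (U \<times> V \<times> W)) = dim U + dim V + dim W"
proof -
  have S: "subspace (U \<times> V \<times> W)" using assms(1-3) by (intro subspace_Times)
  then show "subspace (graph_param ` (U \<times> V \<times> W))"
    by (rule linear_subspace_image[OF linear_graph_param])
  have in_A: "a \<in> A" "b \<in> A" "c \<in> A" if "(a, b, c) \<in> U \<times> V \<times> W" for a b c
    using that assms(4-6) by auto
  show "graph_param ` (U \<times> V \<times> W) \<subseteq> A \<times> B \<times> C"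
  proof (rule image_subsetI)
    fix p assume p: "p \<in> U \<times> V \<times> W"
    obtain a b c where "p = (a, b, c)" by (rule prod_cases3)
    with p show "graph_param p \<in> A \<times> B \<times> C" using in_A[of a b c] graph_param_mem[of a b c] by simp
  qed
  have "p = 0" if p: "p \<in> U \<times> V \<times> W" "graph_param p = 0" for p
  proof -
    obtain a b c where "p = (a, b, c)" by (rule prod_cases3)
    with p show "p = 0" using in_A[of a b c] graph_param_eq_0[of a b c] by simp
  qed
  then show "dim (graph_param ` (U \<times> V \<times> W)) = dim U + dim V + dim W"
    using dim_linear_image_eq[OF linear_graph_param S] assms(1-3) by (simp add: dim_Times subspace_Times)
qed

lemma maslov_form_graph_param_sign:
  assumes X: "X \<subseteq> A" "\<And>x. x \<in> X \<Longrightarrow> x \<noteq> 0 \<Longrightarrow> omega x (T x) < 0"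
    and Y: "Y \<subseteq> A" "\<And>y. y \<in> Y \<Longrightarrow> y \<noteq> 0 \<Longrightarrow> omega y (T y) > 0"
  shows "p \<in> Y \<times> X \<times> X \<Longrightarrow> p \<noteq> 0 \<Longrightarrow> maslov_form (graph_param p) > 0"
    and "p \<in> X \<times> Y \<times> Y \<Longrightarrow> p \<noteq> 0 \<Longrightarrow> maslov_form (graph_param p) < 0"
proof -
  have X_le: "omega x (T x) \<le> 0" if "x \<in> X" for x
    using X(2)[OF that] linear_0[OF T(1)] by (cases "x = 0") auto
  have Y_ge: "omega y (T y) \<ge> 0" if "y \<in> Y" for y
    using Y(2)[OF that] linear_0[OF T(1)] by (cases "y = 0") auto
  show "maslov_form (graph_param p) > 0" if "p \<in> Y \<times> X \<times> X" "p \<noteq> 0"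
  proof (cases p rule: prod_cases3)
    case (fields y x1 x2)
    have mem: "y \<in> Y" "x1 \<in> X" "x2 \<in> X" using that fields by auto
    have "y \<noteq> 0 \<or> x1 \<noteq> 0 \<or> x2 \<noteq> 0" using that fields by simp
    then have "0 < omega y (T y) \<or> omega x1 (T x1) < 0 \<or> omega x2 (T x2) < 0"
      using mem X(2) Y(2) by blast
    moreover have "y \<in> A" "x1 \<in> A" "x2 \<in> A" using mem X(1) Y(1) by auto
    ultimately show ?thesis
      using Y_ge[OF mem(1)] X_le[OF mem(2)] X_le[OF mem(3)]
      unfolding fields maslov_form_graph_param[OF \<open>y \<in> A\<close> \<open>x1 \<in> A\<close> \<open>x2 \<in> A\<close>]
      by (elim disjE) linarith+
  qed
  show "maslov_form (graph_param p) < 0" if "p \<in> X \<times> Y \<times> Y" "p \<noteq> 0"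
  proof (cases p rule: prod_cases3)
    case (fields x y1 y2)
    have mem: "x \<in> X" "y1 \<in> Y" "y2 \<in> Y" using that fields by auto
    have "x \<noteq> 0 \<or> y1 \<noteq> 0 \<or> y2 \<noteq> 0" using that fields by simp
    then have "omega x (T x) < 0 \<or> 0 < omega y1 (T y1) \<or> 0 < omega y2 (T y2)"
      using mem X(2) Y(2) by blast
    moreover have "x \<in> A" "y1 \<in> A" "y2 \<in> A" using mem X(1) Y(1) by auto
    ultimately show ?thesis
      using X_le[OF mem(1)] Y_ge[OF mem(2)] Y_ge[OF mem(3)]
      unfolding fields maslov_form_graph_param[OF \<open>x \<in> A\<close> \<open>y1 \<in> A\<close> \<open>y2 \<in> A\<close>]
      by (elim disjE) linarith+
  qed
qed

lemma maslov_eq_dim_diff: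
  assumes X: "subspace X" "X \<subseteq> A" "\<And>x. x \<in> X \<Longrightarrow> x \<noteq> 0 \<Longrightarrow> omega x (T x) < 0"
    and Y: "subspace Y" "Y \<subseteq> A" "\<And>y. y \<in> Y \<Longrightarrow> y \<noteq> 0 \<Longrightarrow> omega y (T y) > 0"
    and dim: "dim X + dim Y = CARD('n)"
  shows "maslov A B C = int (dim X) - int (dim Y)"
proof -
  note pos = maslov_form_graph_param_sign(1)[OF X(2,3) Y(2,3)]
  note neg = maslov_form_graph_param_sign(2)[OF X(2,3) Y(2,3)]
  let ?P = "graph_param ` (Y \<times> X \<times> X)" and ?N = "graph_param ` (X \<times> Y \<times> Y)"
  note P = graph_param_image[OF Y(1) X(1) X(1) Y(2) X(2) X(2)]
  note N = graph_param_image[OF X(1) Y(1) Y(1) X(2) Y(2) Y(2)]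
  have param_0: "graph_param 0 = 0" by (rule linear_0[OF linear_graph_param])
  have "quad_signature maslov_form (A \<times> B \<times> C) = int (dim ?P) - int (dim ?N)"
  proof (rule quad_signature_eqI[OF _ P(1,2) _ N(1,2)])
    show "subspace (A \<times> B \<times> C)" using A B C by (intro subspace_Times lagrangian_subspace)
    show "\<forall>q\<in>?P. q \<noteq> 0 \<longrightarrow> maslov_form q > 0" using pos param_0 by fastforce
    show "\<forall>q\<in>?N. q \<noteq> 0 \<longrightarrow> maslov_form q < 0" using neg param_0 by fastforce
    show "dim ?P + dim ?N = dim (A \<times> B \<times> C)"
      using P(3) N(3) dim A B C by (simp add: dim_Times lagrangian_subspace lagrangian_dim subspace_Times)
  qed
  then show ?thesis using P(3) N(3) by (simp add: maslov_eq_quad_signature)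
qed

end

lemma maslov_eq_card_iff:
  fixes A B C :: "'n::finite sympl set"
  assumes A: "A \<in> lagrangians" and B: "B \<in> lagrangians" and C: "C \<in> lagrangians"
    and AB: "A \<inter> B = {0}" and BC: "B \<inter> C = {0}" and AC: "A \<inter> C = {0}"
  shows "maslov A B C = int CARD('n) \<longleftrightarrow> negative_triple A B C"
proof -
  obtain T where T: "linear T" "\<And>x. T x \<in> B" "\<And>x. x + T x \<in> C"
    and T_unique: "\<And>x y. y \<in> B \<Longrightarrow> x + y \<in> C \<Longrightarrow> y = T x"
    using transverse_graph_map[OF B C BC] by blast
  note graph = A B C AB AC T
  have neg_iff: "negative_triple A B C \<longleftrightarrow> (\<forall>x\<in>A. x \<noteq> 0 \<longrightarrow> omega x (T x) < 0)"
    unfolding negative_triple_def using T T_unique by metis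
  define \<beta> where "\<beta> x y = omega x (T y)" for x y
  have "bilinear \<beta>"
    unfolding bilinear_def \<beta>_def
    by (intro allI conjI linearI) (simp_all add: linear_add[OF T(1)] linear_scale[OF T(1)])
  moreover have "\<beta> x y = \<beta> y x" if "x \<in> A" "y \<in> A" for x y
    using omega_graph_sym[OF graph that] by (simp add: \<beta>_def)
  moreover have "y = 0" if y: "y \<in> A" "\<forall>x\<in>A. \<beta> x y = 0" for y
  proof -
    have "omega y b = 0" if "b \<in> B" for b
    proof -
      obtain x where "x \<in> A" "b = T x" using \<open>b \<in> B\<close> graph_map_image[OF graph] by blast
      then show ?thesis using y omega_graph_sym[OF graph, of x y] by (simp add: \<beta>_def)
    qed
    then show ?thesis using lagrangian_maximal[OF B] y(1) AB by blast
  qed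
  ultimately obtain X Y where X: "subspace X" "X \<subseteq> A" "\<forall>x\<in>X. x \<noteq> 0 \<longrightarrow> \<beta> x x < 0"
    and Y: "subspace Y" "Y \<subseteq> A" "\<forall>y\<in>Y. y \<noteq> 0 \<longrightarrow> \<beta> y y > 0"
    and dim: "dim X + dim Y = dim A"
    by (rule sylvester_decomposition[OF _ lagrangian_subspace[OF A]])
  have index: "maslov A B C = int (dim X) - int (dim Y)"
    using X Y dim lagrangian_dim[OF A] by (intro maslov_eq_dim_diff[OF graph]) (auto simp: \<beta>_def)
  show ?thesis
  proof
    assume "maslov A B C = int CARD('n)"
    then have "dim A \<le> dim X" using index dim lagrangian_dim[OF A] by simp
    then have "X = A" using subspace_dim_equal[OF X(1) lagrangian_subspace[OF A] X(2)] by simp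
    with X(3) neg_iff show "negative_triple A B C" by (simp add: \<beta>_def)
  next
    assume "negative_triple A B C"
    then have "maslov A B C = int (dim A) - int (dim {0::'n sympl})"
      using neg_iff lagrangian_dim[OF A] lagrangian_subspace[OF A]
      by (intro maslov_eq_dim_diff[OF graph]) (auto simp: subspace_single_0 subspace_0)
    then show "maslov A B C = int CARD('n)" using lagrangian_dim[OF A] by simp
  qed
qed

lemma maslov_eq_neg_card_imp:
  fixes A B C :: "'n::finite sympl set"
  assumes A: "A \<in> lagrangians" and B: "B \<in> lagrangians" and C: "C \<in> lagrangians"
    and AB: "A \<inter> B = {0}" and BC: "B \<inter> C = {0}" and AC: "A \<inter> C = {0}"
    and m: "maslov A B C = - int CARD('n)"
    and xy: "x \<in> A" "y \<in> B" "x + y \<in> C" "x \<noteq> 0"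
  shows "omega x y > 0"
proof -
  have "maslov C B A = int CARD('n)" using maslov_antisym[of A B C] m by simp
  then have neg: "negative_triple C B A"
    using maslov_eq_card_iff[OF C B A] AB BC AC by (simp add: Int_commute)
  have "x + y \<noteq> 0"
  proof
    assume "x + y = 0"
    then have "x = - y" by (simp add: eq_neg_iff_add_eq_0)
    then have "x \<in> B" using xy(2) lagrangian_subspace[OF B] by (simp add: subspace_neg)
    then show False using xy(1,4) AB by auto
  qed
  moreover have "- y \<in> B" using xy(2) lagrangian_subspace[OF B] by (simp add: subspace_neg)
  moreover have "(x + y) + - y \<in> A" using xy(1) by simp
  ultimately have "omega (x + y) (- y) < 0"
    using neg xy(3) unfolding negative_triple_def by blast
  then show ?thesis by simp
qed

section \<open>The quadratic form of a transverse pair\<close>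

definition pair_form :: "'n::finite sympl set \<Rightarrow> 'n sympl set \<Rightarrow> 'n sympl \<Rightarrow> real" where
  "pair_form N C y = omega (proj_along N C y) y"

context
  fixes N C :: "'n::finite sympl set"
  assumes N: "N \<in> lagrangians" and C: "C \<in> lagrangians" and NC: "N \<inter> C = {0}"
begin

lemma proj_along_lagrangian_mem: "proj_along N C y \<in> N" "y - proj_along N C y \<in> C"
  using proj_along_mem[OF complementary_lagrangians[OF N C NC]] by auto

lemma linear_proj_along_lagrangian: "linear (proj_along N C)"
  by (rule linear_proj_along[OF complementary_lagrangians[OF N C NC]])

lemma proj_along_lagrangian_id: "x \<in> N \<Longrightarrow> proj_along N C x = x"
  using proj_along_unique[OF complementary_lagrangians[OF N C NC]] lagrangian_0[OF C] by simp

lemma pair_form_add_left: "x \<in> N \<Longrightarrow> pair_form N C (x + y) = pair_form N C y + omega x y"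
  using lagrangian_isotropic[OF N proj_along_lagrangian_mem(1), of x y]
  by (simp add: pair_form_def linear_add[OF linear_proj_along_lagrangian] proj_along_lagrangian_id)

lemma pair_form_scale: "pair_form N C (c *\<^sub>R y) = c * c * pair_form N C y"
  by (simp add: pair_form_def linear_scale[OF linear_proj_along_lagrangian])

lemma continuous_on_pair_form: "continuous_on UNIV (pair_form N C)"
  unfolding pair_form_def
  by (intro continuous_intros linear_continuous_on linear_conv_bounded_linear[THEN iffD1]
      linear_proj_along_lagrangian)

lemma pair_form_sign_of_maslov:
  assumes M: "M \<in> lagrangians" and NM: "N \<inter> M = {0}" and CM: "C \<inter> M = {0}"
    and index: "maslov N C M = \<sigma> * int CARD('n)" and \<sigma>: "\<sigma> = 1 \<or> \<sigma> = -1"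
    and m: "m \<in> M" "m \<noteq> 0"
  shows "\<sigma> * pair_form N C m < 0"
proof -
  let ?p = "proj_along N C m"
  have sum: "?p + (m - ?p) \<in> M" using m by simp
  have "?p \<noteq> 0"
  proof
    assume "?p = 0"
    then have "m \<in> C" using proj_along_lagrangian_mem(2)[of m] by simp
    then show False using m CM by auto
  qed
  have h: "pair_form N C m = omega ?p (m - ?p)" by (simp add: pair_form_def)
  note proj = proj_along_lagrangian_mem[of m]
  from \<sigma> show ?thesis
  proof
    assume "\<sigma> = 1"
    then have "negative_triple N C M" using index maslov_eq_card_iff[OF N C M NC CM NM] by simp
    then have "omega ?p (m - ?p) < 0" using proj sum \<open>?p \<noteq> 0\<close> unfolding negative_triple_def by blast
    then show ?thesis using \<open>\<sigma> = 1\<close> h by simp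
  next
    assume "\<sigma> = -1"
    then have "omega ?p (m - ?p) > 0"
      using index maslov_eq_neg_card_imp[OF N C M NC CM NM _ proj sum \<open>?p \<noteq> 0\<close>] by simp
    then show ?thesis using \<open>\<sigma> = -1\<close> h by simp
  qed
qed

lemma proj_along_complement_image:
  assumes L: "L \<in> lagrangians" and LN: "L \<inter> N = {0}"
  shows "(\<lambda>y. y - proj_along N C y) ` L = C"
proof (rule linear_image_eq_subspace)
  show "linear (\<lambda>y. y - proj_along N C y)" by (intro linear_compose_sub linear_ident linear_proj_along_lagrangian)
  show "x = 0" if "x \<in> L" "x - proj_along N C x = 0" for x
    using that proj_along_lagrangian_mem(1)[of x] LN by auto
  show "dim C \<le> dim L" using lagrangian_dim[OF L] lagrangian_dim[OF C] by simp
qed (use proj_along_lagrangian_mem(2) lagrangian_subspace[OF L] lagrangian_subspace[OF C] in auto)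

lemma pair_form_polarization:
  assumes L: "L \<in> lagrangians" and a: "a \<in> L" "a' \<in> L"
  shows "omega (proj_along N C a) a' + omega (proj_along N C a') a
    = 2 * omega (proj_along N C a) (a' - proj_along N C a')"
proof -
  define p p' where "p = proj_along N C a" and "p' = proj_along N C a'"
  define c c' where "c = a - p" and "c' = a' - p'"
  have mem: "p \<in> N" "p' \<in> N" "c \<in> C" "c' \<in> C" using proj_along_lagrangian_mem by (auto simp: p_def p'_def c_def c'_def)
  have decomp: "a = p + c" "a' = p' + c'" by (simp_all add: c_def c'_def)
  have "omega a a' = 0" by (rule lagrangian_isotropic[OF L a])
  then have "omega p c' + omega c p' = 0"
    using lagrangian_isotropic[OF N mem(1,2)] lagrangian_isotropic[OF C mem(3,4)] by (simp add: decomp)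
  moreover have "omega p p' = 0" "omega p' p = 0" using lagrangian_isotropic[OF N] mem by auto
  ultimately have "omega p a' + omega p' a = 2 * omega p c'"
    using omega_antisym[of p' c] unfolding decomp by simp
  then show ?thesis by (simp add: p_def p'_def c'_def)
qed

lemma pair_form_definite_of_semidefinite:
  assumes L: "L \<in> lagrangians" and LN: "L \<inter> N = {0}" and LC: "L \<inter> C = {0}"
    and s: "s \<noteq> 0" and semidef: "\<forall>a\<in>L. 0 \<le> s * pair_form N C a"
    and a: "a \<in> L" "a \<noteq> 0"
  shows "0 < s * pair_form N C a"
proof (rule ccontr)
  let ?P = "proj_along N C"
  assume "\<not> 0 < s * pair_form N C a"
  then have null: "s * omega (?P a) a = 0" using semidef a(1) by (force simp: pair_form_def)
  have "bilinear (\<lambda>y y'. s * omega (?P y) y')"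
    unfolding bilinear_def
    by (intro allI conjI linearI) (simp_all add: linear_add[OF linear_proj_along_lagrangian]
        linear_scale[OF linear_proj_along_lagrangian] algebra_simps)
  from psd_null_vector[OF this lagrangian_subspace[OF L] _ a(1) null] semidef
  have "s * omega (?P a) a' + s * omega (?P a') a = 0" if "a' \<in> L" for a'
    using that by (simp add: pair_form_def)
  then have orth: "omega (?P a) (a' - ?P a') = 0" if "a' \<in> L" for a'
    using pair_form_polarization[OF L a(1) that] that s by (simp flip: distrib_left)
  have "omega (?P a) c = 0" if "c \<in> C" for c
  proof -
    have "c \<in> (\<lambda>y. y - ?P y) ` L" using that proj_along_complement_image[OF L LN] by simp
    then obtain a' where "a' \<in> L" "c = a' - ?P a'" by blast
    then show ?thesis using orth by simp
  qed
  then have "?P a \<in> C" using lagrangian_maximal[OF C] by blast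
  then have "?P a = 0" using proj_along_lagrangian_mem(1)[of a] NC by auto
  then have "a \<in> C" using proj_along_lagrangian_mem(2)[of a] by simp
  then show False using a LC by auto
qed

lemma negative_triple_of_pair_form:
  assumes pos: "\<forall>a\<in>L1. a \<noteq> 0 \<longrightarrow> 0 < pair_form N C a" and neg: "\<forall>a\<in>L2. a \<noteq> 0 \<longrightarrow> pair_form N C a < 0"
  shows "negative_triple N L1 L2"
  unfolding negative_triple_def
proof (intro ballI impI)
  fix x y assume xy: "x \<in> N" "y \<in> L1" "x + y \<in> L2" "x \<noteq> 0"
  have h0: "pair_form N C 0 = 0" using pair_form_scale[of 0 0] by simp
  have "pair_form N C y \<ge> 0" "pair_form N C (x + y) \<le> 0"
    using pos neg xy(2,3) h0 by (metis less_imp_le order_refl)+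
  moreover have "y \<noteq> 0 \<or> x + y \<noteq> 0" using xy(4) by auto
  ultimately have "pair_form N C (x + y) < pair_form N C y" using pos neg xy(2,3) by fastforce
  then show "omega x y < 0" using pair_form_add_left[OF xy(1)] by simp
qed

end

lemma negative_triple_compose:
  fixes N L1 L2 L3 :: "'n::finite sympl set"
  assumes N: "N \<in> lagrangians" and L2: "L2 \<in> lagrangians"
    and NL2: "N \<inter> L2 = {0}" and L12: "L1 \<inter> L2 = {0}"
    and neg1: "negative_triple N L1 L2" and neg2: "negative_triple N L2 L3"
  shows "negative_triple L1 L2 L3"
  unfolding negative_triple_def
proof (intro ballI impI)
  fix x y assume x: "x \<in> L1" and y: "y \<in> L2" and xy: "x + y \<in> L3" and x0: "x \<noteq> 0"
  from transverse_lagrangians_sum[OF N L2 NL2, of x]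
  obtain a b where a: "a \<in> N" and b: "b \<in> L2" and x_eq: "x = a + b" by blast
  have "a \<noteq> 0"
  proof
    assume "a = 0"
    then have "x \<in> L2" using b x_eq by simp
    then show False using x x0 L12 by blast
  qed
  have "- a \<in> N" using a lagrangian_subspace[OF N] by (simp add: subspace_neg)
  moreover have "- a + x \<in> L2" using b x_eq by simp
  moreover have "- a \<noteq> 0" using \<open>a \<noteq> 0\<close> by simp
  ultimately have "omega (- a) x < 0" using neg1 x unfolding negative_triple_def by blast
  moreover have "b + y \<in> L2" using b y lagrangian_subspace[OF L2] by (simp add: subspace_add)
  moreover have "a + (b + y) \<in> L3" using xy x_eq by (simp add: add.assoc)
  then have "omega a (b + y) < 0"
    using neg2 a \<open>a \<noteq> 0\<close> \<open>b + y \<in> L2\<close> unfolding negative_triple_def by blast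
  moreover have "omega b y = 0" by (rule lagrangian_isotropic[OF L2 b y])
  \<comment> \<open>hence \<open>\<omega>(x, y) = \<omega>(-a, x) + \<omega>(a, b + y)\<close>\<close>
  ultimately show "omega x y < 0" by (simp add: x_eq)
qed

lemma maslov_eq_card_of_pair_form_signs:
  fixes N C1 C2 L1 L2 L3 :: "'n::finite sympl set"
  assumes lag: "N \<in> lagrangians" "C1 \<in> lagrangians" "C2 \<in> lagrangians"
      "L1 \<in> lagrangians" "L2 \<in> lagrangians" "L3 \<in> lagrangians"
    and NC: "N \<inter> C1 = {0}" "N \<inter> C2 = {0}" and NL2: "N \<inter> L2 = {0}"
    and sign1: "\<forall>a\<in>L1. a \<noteq> 0 \<longrightarrow> 0 < pair_form N C1 a" "\<forall>a\<in>L2. a \<noteq> 0 \<longrightarrow> pair_form N C1 a < 0"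
      "\<forall>a\<in>L3. a \<noteq> 0 \<longrightarrow> pair_form N C1 a < 0"
    and sign2: "\<forall>a\<in>L2. a \<noteq> 0 \<longrightarrow> 0 < pair_form N C2 a" "\<forall>a\<in>L3. a \<noteq> 0 \<longrightarrow> pair_form N C2 a < 0"
  shows "maslov L1 L2 L3 = int CARD('n)"
proof -
  have transverse: "L \<inter> L' = {0}"
    if pos: "\<forall>a\<in>L. a \<noteq> 0 \<longrightarrow> 0 < pair_form N C a" and neg: "\<forall>a\<in>L'. a \<noteq> 0 \<longrightarrow> pair_form N C a < 0"
      and lag: "L \<in> lagrangians" "L' \<in> lagrangians" for L L' C
  proof -
    have "a = 0" if "a \<in> L" "a \<in> L'" for a using that pos neg by force
    then show ?thesis using lagrangian_0 lag by blast
  qed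
  have "L1 \<inter> L2 = {0}" "L1 \<inter> L3 = {0}" "L2 \<inter> L3 = {0}"
    using transverse[OF sign1(1,2) lag(4,5)] transverse[OF sign1(1,3) lag(4,6)]
      transverse[OF sign2 lag(5,6)] by simp_all
  moreover have "negative_triple L1 L2 L3"
    using negative_triple_of_pair_form[OF lag(1,2) NC(1) sign1(1,2)]
      negative_triple_of_pair_form[OF lag(1,3) NC(2) sign2]
    by (rule negative_triple_compose[OF lag(1,5) NL2 \<open>L1 \<inter> L2 = {0}\<close>])
  ultimately show ?thesis using maslov_eq_card_iff[OF lag(4-6)] by blast
qed

section \<open>Signs along the essential graph\<close>

lemma lagrangian_cis: "lag_measurable \<phi> \<Longrightarrow> \<phi> (cis t) \<in> lagrangians"
  by (simp add: lag_measurable_def)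

lemma ess_graphD:
  assumes "(x, L) \<in> ess_graph \<phi>"
  shows "L \<in> lagrangians" "x \<in> sphere 0 1"
    and "e > 0 \<Longrightarrow> \<not> (AE t in lebesgue. t \<in> {0..<2*pi} \<longrightarrow>
                 \<not> (dist (cis t) x < e \<and> lagdist (\<phi> (cis t)) L < e))"
  using assms unfolding ess_graph_def by auto

lemma lagdist_less_imp_near:
  fixes M L :: "'n::finite sympl set"
  assumes M: "M \<in> lagrangians" and y: "y \<in> L" "norm y = 1" and d: "lagdist M L < e"
  shows "\<exists>m\<in>M. dist y m < e"
proof -
  have M0: "0 \<in> M" by (rule lagrangian_0[OF M])
  have "bdd_above ((\<lambda>y. infdist y M) ` (L \<inter> sphere 0 1))"
  proof (rule bdd_aboveI[of _ 1])
    fix r assume "r \<in> (\<lambda>y. infdist y M) ` (L \<inter> sphere 0 1)"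
    then obtain z where "z \<in> L \<inter> sphere 0 1" "r = infdist z M" by blast
    then show "r \<le> 1" using infdist_le[OF M0, of z] by simp
  qed
  then have "infdist y M \<le> (SUP z\<in>L \<inter> sphere 0 1. infdist z M)"
    using y by (intro cSUP_upper) auto
  also have "\<dots> \<le> lagdist M L" unfolding lagdist_def by (rule max.cobounded2)
  finally have "infdist y M < e" using d by simp
  moreover have "infdist y M = (INF m\<in>M. dist y m)" using M0 by (intro infdist_notempty) auto
  ultimately have "(INF m\<in>M. dist y m) < e" by simp
  then show ?thesis using cINF_less_iff[of M "\<lambda>m. dist y m" e] M0 by (auto intro: bdd_belowI[of _ 0])
qed

lemma not_AE_imp_ex:
  assumes "\<not> (AE t in M. t \<in> D \<longrightarrow> \<not> S t)" and "AE t in M. Q t"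
  shows "\<exists>t\<in>D. S t \<and> Q t"
proof (rule ccontr)
  assume "\<not> (\<exists>t\<in>D. S t \<and> Q t)"
  then have "AE t in M. t \<in> D \<longrightarrow> \<not> S t" using assms(2) by (auto elim: AE_mp)
  then show False using assms(1) by simp
qed

lemma ess_graph_nonneg:
  fixes \<phi> :: "complex \<Rightarrow> 'n::finite sympl set" and g :: "'n sympl \<Rightarrow> real"
  assumes meas: "lag_measurable \<phi>" and ess: "(x, L) \<in> ess_graph \<phi>"
    and g: "continuous_on UNIV g" "\<And>c y. g (c *\<^sub>R y) = c * c * g y"
    and near: "\<exists>e>0. AE t in lebesgue. t \<in> {0..<2*pi} \<longrightarrow> dist (cis t) x < e \<longrightarrow> (\<forall>m\<in>\<phi> (cis t). 0 \<le> g m)"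
    and a: "a \<in> L"
  shows "0 \<le> g a"
proof -
  obtain e where e: "e > 0"
    and near_e: "AE t in lebesgue. t \<in> {0..<2*pi} \<longrightarrow> dist (cis t) x < e \<longrightarrow> (\<forall>m\<in>\<phi> (cis t). 0 \<le> g m)"
    using near by blast
  have "y \<in> closure {m. 0 \<le> g m}" if y: "y \<in> L" "norm y = 1" for y
    unfolding closure_approachable
  proof (intro allI impI)
    fix d :: real assume "d > 0"
    then have "min e d > 0" using e by simp
    from not_AE_imp_ex[OF ess_graphD(3)[OF ess this] near_e] obtain t where
      "dist (cis t) x < e" "lagdist (\<phi> (cis t)) L < d" "\<forall>m\<in>\<phi> (cis t). 0 \<le> g m" by auto
    with lagdist_less_imp_near[OF lagrangian_cis[OF meas] y] obtain m where "m \<in> \<phi> (cis t)" "dist y m < d"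
      by blast
    then show "\<exists>m\<in>{m. 0 \<le> g m}. dist m y < d"
      using \<open>\<forall>m\<in>\<phi> (cis t). 0 \<le> g m\<close> by (metis dist_commute mem_Collect_eq)
  qed
  then have unit: "0 \<le> g y" if "y \<in> L" "norm y = 1" for y
    using that closed_Collect_le[OF continuous_on_const g(1)] closure_closed by blast
  show ?thesis
  proof (cases "a = 0")
    case True
    then show ?thesis using g(2)[of 0 0] by simp
  next
    case False
    have "(1 / norm a) *\<^sub>R a \<in> L"
      using a lagrangian_subspace[OF ess_graphD(1)[OF ess]] by (simp add: subspace_scale)
    then have "0 \<le> g ((1 / norm a) *\<^sub>R a)" using False by (intro unit) auto
    moreover have "g a = norm a * norm a * g ((1 / norm a) *\<^sub>R a)"
      using g(2)[of "norm a" "(1 / norm a) *\<^sub>R a"] False by simp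
    ultimately show ?thesis by simp
  qed
qed

lemma ess_graph_pair_form_definite:
  fixes \<phi> :: "complex \<Rightarrow> 'n::finite sympl set" and b :: "real \<Rightarrow> int"
  assumes meas: "lag_measurable \<phi>" and ess: "(x, L) \<in> ess_graph \<phi>"
    and N: "N \<in> lagrangians" and C: "C \<in> lagrangians" and NC: "N \<inter> C = {0}"
    and LN: "L \<inter> N = {0}" and LC: "L \<inter> C = {0}"
    and index: "AE t in lebesgue. t \<in> {0..<2*pi} \<longrightarrow>
        maslov N C (\<phi> (cis t)) = int CARD('n) * b t \<and> N \<inter> \<phi> (cis t) = {0} \<and> C \<inter> \<phi> (cis t) = {0}"
    and orient: "\<exists>e>0. \<forall>t. dist (cis t) x < e \<longrightarrow> b t = \<sigma>" and \<sigma>: "\<sigma> = 1 \<or> \<sigma> = -1"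
    and a: "a \<in> L" "a \<noteq> 0"
  shows "\<sigma> * pair_form N C a < 0"
proof -
  have h0: "pair_form N C 0 = 0" using pair_form_scale[OF N C NC, of 0 0] by simp
  obtain e where "e > 0" and e: "\<And>t. dist (cis t) x < e \<Longrightarrow> b t = \<sigma>" using orient by blast
  have "AE t in lebesgue. t \<in> {0..<2*pi} \<longrightarrow> dist (cis t) x < e \<longrightarrow>
      (\<forall>m\<in>\<phi> (cis t). 0 \<le> - \<sigma> * pair_form N C m)"
    using index
  proof eventually_elim
    case (elim t)
    show ?case
    proof (intro impI ballI)
      fix m assume "t \<in> {0..<2*pi}" "dist (cis t) x < e" "m \<in> \<phi> (cis t)"
      then show "0 \<le> - \<sigma> * pair_form N C m"
        using elim pair_form_sign_of_maslov[OF N C NC lagrangian_cis[OF meas], of t \<sigma> m] e \<sigma> h0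
        by (cases "m = 0") (auto simp: less_imp_le mult.commute)
    qed
  qed
  then have near: "\<exists>e>0. AE t in lebesgue. t \<in> {0..<2*pi} \<longrightarrow> dist (cis t) x < e \<longrightarrow>
      (\<forall>m\<in>\<phi> (cis t). 0 \<le> - \<sigma> * pair_form N C m)"
    using \<open>e > 0\<close> by blast
  have cont: "continuous_on UNIV (\<lambda>a. - \<sigma> * pair_form N C a)"
    using continuous_on_pair_form[OF N C NC] by (intro continuous_intros)
  have hom: "- \<sigma> * pair_form N C (c *\<^sub>R y) = c * c * (- \<sigma> * pair_form N C y)" for c y
    using pair_form_scale[OF N C NC] by simp
  have "\<forall>a\<in>L. 0 \<le> - \<sigma> * pair_form N C a"
    using ess_graph_nonneg[OF meas ess cont hom near] by blast
  then have "0 < - \<sigma> * pair_form N C a"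
    using \<sigma> a by (intro pair_form_definite_of_semidefinite[OF N C NC ess_graphD(1)[OF ess] LN LC]) auto
  then show ?thesis by simp
qed

section \<open>Cyclic order on the circle\<close>

lemma cis_add_multiple_2pi: "cis (z + 2 * pi * of_int k) = cis z"
  using cis_mult[of z "2 * pi * of_int k"] cis_multiple_2pi[of "of_int k"] by simp

lemma cis_eq_imp_int_multiple: "cis a = cis b \<Longrightarrow> \<exists>k::int. a = b + 2 * pi * of_int k"
  using sin_cos_eq_iff[of a b] by (metis cis.sel(1) cis.sel(2))

lemma cis_neq_of_less:
  assumes "a < b" "b < a + 2 * pi"
  shows "cis a \<noteq> cis b"
proof
  assume "cis a = cis b"
  then obtain k :: int where k: "b = a + 2 * pi * of_int k" using cis_eq_imp_int_multiple by metis
  then have "0 < (of_int k :: real)" "(of_int k :: real) < 1" using assms by (simp_all add: zero_less_mult_iff)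
  then have "0 < k" "k < 1" by simp_all
  then show False by simp
qed

lemma ccw_cis: "a < b \<Longrightarrow> b < c \<Longrightarrow> c < a + 2 * pi \<Longrightarrow> ccw (cis a) (cis b) (cis c)"
  unfolding ccw_def by blast

lemma ccw_imp_not_ccw_rev:
  assumes "ccw x y z"
  shows "\<not> ccw z y x"
proof
  assume "ccw z y x"
  obtain t1 t2 t3 where t: "t1 < t2" "t2 < t3" "t3 < t1 + 2 * pi" "x = cis t1" "y = cis t2" "z = cis t3"
    using assms unfolding ccw_def by blast
  obtain s1 s2 s3 where s: "s1 < s2" "s2 < s3" "s3 < s1 + 2 * pi" "z = cis s1" "y = cis s2" "x = cis s3"
    using \<open>ccw z y x\<close> unfolding ccw_def by blast
  obtain k1 k2 k3 :: int where k: "t1 = s3 + 2 * pi * of_int k1" "t2 = s2 + 2 * pi * of_int k2"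
      "t3 = s1 + 2 * pi * of_int k3"
    using cis_eq_imp_int_multiple t(4-6) s(4-6) by metis
  have int_eq_1: "m = 1" if "2 * pi * of_int m = d" "0 < d" "d < 4 * pi" for m :: int and d
  proof -
    have "0 < (of_int m :: real)" "(of_int m :: real) < 2"
      using that pi_gt_zero by (auto simp: zero_less_mult_iff)
    then show ?thesis by simp
  qed
  have "k2 - k1 = 1"
  proof (rule int_eq_1)
    show "2 * pi * of_int (k2 - k1) = (t2 - t1) + (s3 - s2)" using k by (simp add: algebra_simps)
  qed (use t(1-3) s(1-3) in linarith)+
  moreover have "k3 - k2 = 1"
  proof (rule int_eq_1)
    show "2 * pi * of_int (k3 - k2) = (t3 - t2) + (s2 - s1)" using k by (simp add: algebra_simps)
  qed (use t(1-3) s(1-3) in linarith)+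
  ultimately have "k3 = k1 + 2" by simp
  then have "(of_int k3 :: real) = of_int k1 + 2" by simp
  then have "t3 - t1 = s1 - s3 + 4 * pi" using k by (simp add: algebra_simps)
  then show False using t(1-3) s(1-3) by linarith
qed

lemma beta1_cis_pos:
  assumes "a < b" "b < c" "c < a + 2 * pi"
  shows "beta1 (cis a) (cis b) (cis c) = 1"
proof -
  have "cis a \<noteq> cis b" "cis b \<noteq> cis c" "cis a \<noteq> cis c"
    using assms by (intro cis_neq_of_less; linarith)+
  then show ?thesis using ccw_cis[OF assms] by (simp add: beta1_def)
qed

lemma beta1_cis_neg:
  assumes "a < b" "b < c" "c < a + 2 * pi"
  shows "beta1 (cis c) (cis b) (cis a) = -1"
proof -
  have "cis a \<noteq> cis b" "cis b \<noteq> cis c" "cis a \<noteq> cis c"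
    using assms by (intro cis_neq_of_less; linarith)+
  then show ?thesis using ccw_cis[OF assms] ccw_imp_not_ccw_rev[OF ccw_cis[OF assms]]
    by (simp add: beta1_def eq_commute)
qed

lemma ccw_rotate: "ccw x y z \<Longrightarrow> ccw y z x"
  unfolding ccw_def
  by (metis add.commute add_less_cancel_left cis_add_multiple_2pi[of _ 1] mult.right_neutral of_int_1)

lemma ccw_or_ccw_rev:
  assumes "x \<in> sphere 0 1" "y \<in> sphere 0 1" "z \<in> sphere 0 1" "x \<noteq> y" "y \<noteq> z" "x \<noteq> z"
  shows "ccw x y z \<or> ccw z y x"
proof -
  have cis_Arg_eq: "cis (Arg w) = w" if "w \<in> sphere 0 1" for w
  proof -
    have "w \<noteq> 0" using that by auto
    then show ?thesis using that cis_Arg[of w] by (simp add: sgn_div_norm)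
  qed
  define a b c where "a = Arg x" and "b = Arg y" and "c = Arg z"
  have xyz: "x = cis a" "y = cis b" "z = cis c" using cis_Arg_eq assms by (auto simp: a_def b_def c_def)
  have ccw_Arg: "ccw (cis p) (cis q) (cis r)" if "p < q" "q < r" "p \<in> {a, b, c}" "r \<in> {a, b, c}" for p q r
    using that Arg_bounded[of x] Arg_bounded[of y] Arg_bounded[of z]
    by (intro ccw_cis) (auto simp: a_def b_def c_def)
  have "a \<noteq> b" "b \<noteq> c" "a \<noteq> c" using assms xyz by auto
  then consider "a < b" "b < c" | "b < c" "c < a" | "c < a" "a < b"
    | "a < c" "c < b" | "c < b" "b < a" | "b < a" "a < c"
    by linarith
  then show ?thesis
  proof cases
    case 1 then show ?thesis using ccw_Arg[of a b c] xyz by simp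
  next
    case 2 then show ?thesis using ccw_Arg[of b c a] xyz ccw_rotate by (metis insertI1 insertI2)
  next
    case 3 then show ?thesis using ccw_Arg[of c a b] xyz ccw_rotate by (metis insertI1 insertI2)
  next
    case 4 then show ?thesis using ccw_Arg[of a c b] xyz ccw_rotate by (metis insertI1 insertI2)
  next
    case 5 then show ?thesis using ccw_Arg[of c b a] xyz by simp
  next
    case 6 then show ?thesis using ccw_Arg[of b a c] xyz ccw_rotate by (metis insertI1 insertI2)
  qed
qed

lemma cis_dist_small_imp_angle_near:
  assumes "\<mu> > 0"
  shows "\<exists>e>0. \<forall>z t. dist (cis z) (cis t) < e \<longrightarrow> (\<exists>z'. cis z' = cis z \<and> \<bar>z' - t\<bar> < \<mu>)"
proof -
  define m where "m = min \<mu> pi"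
  have m: "0 < m" "m \<le> pi" "m \<le> \<mu>" using assms by (auto simp: m_def)
  have "cos m < 1" using cos_monotone_0_pi[of 0 m] m by simp
  define e where "e = sqrt (2 - 2 * cos m)"
  have "e > 0" using \<open>cos m < 1\<close> by (simp add: e_def)
  have dist_cis: "(dist (cis z) (cis t))\<^sup>2 = 2 - 2 * cos (z - t)" for z t
  proof -
    have "cis t * cis (z - t) = cis z" by (metis add.commute cis_mult diff_add_cancel)
    then have "cis z - cis t = cis t * (cis (z - t) - 1)" by (simp add: algebra_simps)
    then have "dist (cis z) (cis t) = cmod (cis (z - t) - 1)" by (simp add: dist_norm norm_mult)
    also have "(cmod (cis (z - t) - 1))\<^sup>2 = (cos (z - t) - 1)\<^sup>2 + (sin (z - t))\<^sup>2" by (simp add: cmod_power2)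
    finally show ?thesis using sin_cos_squared_add[of "z - t"] by (simp add: power2_eq_square algebra_simps)
  qed
  have "\<exists>z'. cis z' = cis z \<and> \<bar>z' - t\<bar> < \<mu>" if "dist (cis z) (cis t) < e" for z t
  proof (intro exI conjI)
    define w where "w = normalize_angle (z - t)"
    show "cis (t + w) = cis z"
      by (metis add.commute cis_mult cis_normalize_angle diff_add_cancel w_def)
    have "\<bar>w\<bar> \<le> pi"
      using normalize_angle_lbound[of "z - t"] normalize_angle_ubound[of "z - t"] by (simp add: w_def abs_le_iff)
    have "cos w = cos (z - t)" using cis_normalize_angle[of "z - t"] by (metis cis.sel(1) w_def)
    moreover have "(dist (cis z) (cis t))\<^sup>2 < e\<^sup>2" using that by (intro power_strict_mono) auto
    ultimately have "2 - 2 * cos w < e\<^sup>2" using dist_cis[of z t] by simp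
    then have "cos m < cos \<bar>w\<bar>" using \<open>cos m < 1\<close> by (simp add: e_def)
    then have "\<bar>w\<bar> < m" using cos_monotone_0_pi_le[of m "\<bar>w\<bar>"] m \<open>\<bar>w\<bar> \<le> pi\<close> by force
    then show "\<bar>t + w - t\<bar> < \<mu>" using m by simp
  qed
  then show ?thesis using \<open>e > 0\<close> by blast
qed

lemma beta1_eventually_eq_1:
  assumes "a < b" "b < t" "t < a + 2 * pi"
  shows "\<exists>e>0. \<forall>s. dist (cis s) (cis t) < e \<longrightarrow> beta1 (cis a) (cis b) (cis s) = 1"
proof -
  have "min (t - b) (a + 2 * pi - t) > 0" using assms by simp
  from cis_dist_small_imp_angle_near[OF this] obtain e where "e > 0"
    and e: "\<And>s. dist (cis s) (cis t) < e \<Longrightarrow> \<exists>s'. cis s' = cis s \<and> \<bar>s' - t\<bar> < min (t - b) (a + 2 * pi - t)"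
    by blast
  have "beta1 (cis a) (cis b) (cis s) = 1" if s: "dist (cis s) (cis t) < e" for s
  proof -
    obtain s' where "cis s' = cis s" "\<bar>s' - t\<bar> < min (t - b) (a + 2 * pi - t)" using e[OF s] by blast
    then show ?thesis using beta1_cis_pos[of a b s'] assms by (auto simp: abs_less_iff)
  qed
  then show ?thesis using \<open>e > 0\<close> by blast
qed

lemma beta1_eventually_eq_neg_1:
  assumes "a < t" "t < b" "b < a + 2 * pi"
  shows "\<exists>e>0. \<forall>s. dist (cis s) (cis t) < e \<longrightarrow> beta1 (cis a) (cis b) (cis s) = -1"
proof -
  have "min (t - a) (b - t) > 0" using assms by simp
  from cis_dist_small_imp_angle_near[OF this] obtain e where "e > 0"
    and e: "\<And>s. dist (cis s) (cis t) < e \<Longrightarrow> \<exists>s'. cis s' = cis s \<and> \<bar>s' - t\<bar> < min (t - a) (b - t)"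
    by blast
  have "beta1 (cis a) (cis b) (cis s) = -1" if s: "dist (cis s) (cis t) < e" for s
  proof -
    obtain s' where s': "cis s' = cis s" "\<bar>s' - t\<bar> < min (t - a) (b - t)" using e[OF s] by blast
    then have "beta1 (cis (a + 2 * pi)) (cis b) (cis s') = -1"
      using beta1_cis_neg[of s' b "a + 2 * pi"] assms by (auto simp: abs_less_iff)
    then show ?thesis using s'(1) cis_add_multiple_2pi[of a 1] by simp
  qed
  then show ?thesis using \<open>e > 0\<close> by blast
qed

lemma AE_ex_in_interval:
  fixes a b :: real
  assumes "a < b" and "AE t in lebesgue. P t"
  shows "\<exists>t. a < t \<and> t < b \<and> P t"
proof (rule ccontr)
  assume "\<not> (\<exists>t. a < t \<and> t < b \<and> P t)"
  then have "AE t in lebesgue. t \<notin> {a<..<b}" using assms(2) by (auto elim: AE_mp)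
  then have "AE t in lborel. t \<notin> {a<..<b}" by (simp add: AE_completion_iff)
  moreover have eq: "{t \<in> space lborel. \<not> t \<notin> {a<..<b}} = {a<..<b}" by auto
  ultimately have "emeasure lborel {a<..<b} = 0" using AE_iff_measurable[OF _ eq] by simp
  then show False using assms(1) by simp
qed

lemma AE_ex_angle_near:
  assumes "AE t in lebesgue. P t" and "\<mu> > 0"
  obtains t t' where "t \<in> {0..<2*pi}" "P t" "cis t' = cis t" "\<bar>t' - g\<bar> < \<mu>"
proof -
  define k where "k = \<lfloor>g / (2 * pi)\<rfloor>"
  define g0 where "g0 = g - 2 * pi * of_int k"
  have "of_int k \<le> g / (2 * pi)" "g / (2 * pi) < of_int k + 1" unfolding k_def by linarith+
  then have g0: "0 \<le> g0" "g0 < 2 * pi" unfolding g0_def by (simp_all add: field_simps)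
  have "max (g0 - \<mu>) 0 < min (g0 + \<mu>) (2 * pi)" using g0 assms(2) by simp
  then obtain t where t: "max (g0 - \<mu>) 0 < t" "t < min (g0 + \<mu>) (2 * pi)" "P t"
    using AE_ex_in_interval[OF _ assms(1)] by blast
  show ?thesis
  proof (rule that)
    show "t \<in> {0..<2*pi}" "P t" using t by auto
    show "cis (t + 2 * pi * of_int k) = cis t" by (rule cis_add_multiple_2pi)
    show "\<bar>t + 2 * pi * of_int k - g\<bar> < \<mu>" using t by (auto simp: g0_def)
  qed
qed

lemma AE_lebesgue_triple:
  fixes P :: "real \<times> real \<times> real \<Rightarrow> bool"
  assumes "AE p in lebesgue. P p"
  shows "AE a in lebesgue. AE b in lebesgue. AE c in lebesgue. P (a, b, c)"
proof -
  have prod: "(lborel \<Otimes>\<^sub>M lborel :: ('a::euclidean_space \<times> 'b::euclidean_space) measure) = lborel"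
    by (rule lborel_prod)
  have "AE p in (lborel :: (real \<times> real \<times> real) measure). P p"
    using assms by (simp add: AE_completion_iff)
  then have "AE p in (lborel \<Otimes>\<^sub>M lborel :: (real \<times> real \<times> real) measure). P p"
    unfolding prod .
  then have "AE a in lborel. AE q in (lborel :: (real \<times> real) measure). P (a, q)"
    by (rule lborel_pair.AE_pair)
  then have "AE a in lborel. AE b in lborel. AE c in lborel. P (a, b, c)"
  proof (rule AE_mp[OF _ AE_I2], intro impI)
    fix a assume "AE q in (lborel :: (real \<times> real) measure). P (a, q)"
    then have "AE q in (lborel \<Otimes>\<^sub>M lborel :: (real \<times> real) measure). P (a, q)" unfolding prod .
    then show "AE b in lborel. AE c in lborel. P (a, b, c)" by (rule lborel_pair.AE_pair)
  qed
  then show ?thesis by (simp add: AE_completion_iff)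
qed

lemma AE_ex_transverse_angle_near:
  fixes \<phi> :: "complex \<Rightarrow> 'n::finite sympl set"
  assumes transverse: "\<forall>L\<in>lagrangians. AE t in lebesgue. t \<in> {0..<2*pi} \<longrightarrow> \<phi> (cis t) \<inter> L = {0}"
    and P: "AE t in lebesgue. P t" and Ls: "finite Ls" "Ls \<subseteq> lagrangians" and \<mu>: "\<mu> > 0"
  obtains t t' where "t \<in> {0..<2*pi}" "P t" "\<forall>L\<in>Ls. \<phi> (cis t) \<inter> L = {0}"
    and "cis t' = cis t" "\<bar>t' - g\<bar> < \<mu>"
proof -
  have "AE t in lebesgue. \<forall>L\<in>Ls. t \<in> {0..<2*pi} \<longrightarrow> \<phi> (cis t) \<inter> L = {0}"
    using transverse Ls by (intro eventually_ball_finite) auto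
  with P have "AE t in lebesgue. P t \<and> (t \<in> {0..<2*pi} \<longrightarrow> (\<forall>L\<in>Ls. \<phi> (cis t) \<inter> L = {0}))"
    by eventually_elim auto
  from AE_ex_angle_near[OF this \<mu>] that show ?thesis by blast
qed

section \<open>The Maslov cocycle on the essential graph\<close>

lemma maslov_eq_card_of_generic_angles:
  fixes \<phi> :: "complex \<Rightarrow> 'n::finite sympl set" and u v w t1 t2 t3 :: real
  defines "N \<equiv> \<phi> (cis u)" and "C1 \<equiv> \<phi> (cis v)" and "C2 \<equiv> \<phi> (cis w)"
  assumes meas: "lag_measurable \<phi>"
    and ess: "(cis t1, L1) \<in> ess_graph \<phi>" "(cis t2, L2) \<in> ess_graph \<phi>" "(cis t3, L3) \<in> ess_graph \<phi>"
    and order: "u - 2 * pi < t1" "t1 < v" "v < t2" "t2 < w" "w < t3" "t3 < u"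
    and NC: "N \<inter> C1 = {0}" "N \<inter> C2 = {0}"
    and LN: "L1 \<inter> N = {0}" "L2 \<inter> N = {0}" "L3 \<inter> N = {0}"
    and LC: "L1 \<inter> C1 = {0}" "L2 \<inter> C1 = {0}" "L3 \<inter> C1 = {0}" "L2 \<inter> C2 = {0}" "L3 \<inter> C2 = {0}"
    and transverse: "\<forall>L\<in>lagrangians. AE t in lebesgue. t \<in> {0..<2*pi} \<longrightarrow> \<phi> (cis t) \<inter> L = {0}"
    and cocycle1: "AE t in lebesgue. t \<in> {0..<2*pi} \<longrightarrow>
        maslov N C1 (\<phi> (cis t)) = int CARD('n) * beta1 (cis u) (cis v) (cis t)"
    and cocycle2: "AE t in lebesgue. t \<in> {0..<2*pi} \<longrightarrow>
        maslov N C2 (\<phi> (cis t)) = int CARD('n) * beta1 (cis u) (cis w) (cis t)"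
  shows "maslov L1 L2 L3 = int CARD('n)"
proof -
  have lag: "N \<in> lagrangians" "C1 \<in> lagrangians" "C2 \<in> lagrangians"
    using lagrangian_cis[OF meas] by (simp_all add: N_def C1_def C2_def)
  have L: "L1 \<in> lagrangians" "L2 \<in> lagrangians" "L3 \<in> lagrangians" using ess ess_graphD(1) by auto
  have index1: "AE t in lebesgue. t \<in> {0..<2*pi} \<longrightarrow>
      maslov N C1 (\<phi> (cis t)) = int CARD('n) * beta1 (cis u) (cis v) (cis t) \<and>
      N \<inter> \<phi> (cis t) = {0} \<and> C1 \<inter> \<phi> (cis t) = {0}"
    using cocycle1 transverse[rule_format, OF lag(1)] transverse[rule_format, OF lag(2)]
    by eventually_elim (auto simp: Int_commute)
  have index2: "AE t in lebesgue. t \<in> {0..<2*pi} \<longrightarrow>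
      maslov N C2 (\<phi> (cis t)) = int CARD('n) * beta1 (cis u) (cis w) (cis t) \<and>
      N \<inter> \<phi> (cis t) = {0} \<and> C2 \<inter> \<phi> (cis t) = {0}"
    using cocycle2 transverse[rule_format, OF lag(1)] transverse[rule_format, OF lag(3)]
    by eventually_elim (auto simp: Int_commute)
  have u: "cis (u - 2 * pi) = cis u" using cis_add_multiple_2pi[of "u - 2 * pi" 1] by simp
  note near_pos = beta1_eventually_eq_1[of "u - 2 * pi", unfolded u]
  note near_neg = beta1_eventually_eq_neg_1[of "u - 2 * pi", unfolded u]
  note definite1 = ess_graph_pair_form_definite[OF meas _ lag(1,2) NC(1) _ _ index1]
  note definite2 = ess_graph_pair_form_definite[OF meas _ lag(1,3) NC(2) _ _ index2]
  have "\<forall>a\<in>L1. a \<noteq> 0 \<longrightarrow> 0 < pair_form N C1 a"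
    using definite1[where \<sigma> = "-1", OF ess(1) LN(1) LC(1) near_neg] order by simp
  moreover have "\<forall>a\<in>L2. a \<noteq> 0 \<longrightarrow> pair_form N C1 a < 0"
    using definite1[where \<sigma> = 1, OF ess(2) LN(2) LC(2) near_pos] order by simp
  moreover have "\<forall>a\<in>L3. a \<noteq> 0 \<longrightarrow> pair_form N C1 a < 0"
    using definite1[where \<sigma> = 1, OF ess(3) LN(3) LC(3) near_pos] order by simp
  moreover have "\<forall>a\<in>L2. a \<noteq> 0 \<longrightarrow> 0 < pair_form N C2 a"
    using definite2[where \<sigma> = "-1", OF ess(2) LN(2) LC(4) near_neg] order by simp
  moreover have "\<forall>a\<in>L3. a \<noteq> 0 \<longrightarrow> pair_form N C2 a < 0"
    using definite2[where \<sigma> = 1, OF ess(3) LN(3) LC(5) near_pos] order by simp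
  ultimately show ?thesis
    using LN(2) by (intro maslov_eq_card_of_pair_form_signs[OF lag L NC]) (auto simp: Int_commute)
qed

lemma maslov_ess_graph_ccw:
  fixes \<phi> :: "complex \<Rightarrow> 'n::finite sympl set"
  assumes meas: "lag_measurable \<phi>"
    and cocycle: "AE p in lebesgue. p \<in> {0..<2*pi} \<times> {0..<2*pi} \<times> {0..<2*pi} \<longrightarrow>
           maslov (\<phi> (cis (fst p))) (\<phi> (cis (fst (snd p)))) (\<phi> (cis (snd (snd p))))
             = int CARD('n) * beta1 (cis (fst p)) (cis (fst (snd p))) (cis (snd (snd p)))"
    and transverse: "\<forall>L\<in>lagrangians. AE t in lebesgue. t \<in> {0..<2*pi} \<longrightarrow> \<phi> (cis t) \<inter> L = {0}"
    and ess: "(x1, L1) \<in> ess_graph \<phi>" "(x2, L2) \<in> ess_graph \<phi>" "(x3, L3) \<in> ess_graph \<phi>"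
    and "ccw x1 x2 x3"
  shows "maslov L1 L2 L3 = int CARD('n)"
proof -
  obtain t1 t2 t3 where t: "t1 < t2" "t2 < t3" "t3 < t1 + 2 * pi"
    and x: "x1 = cis t1" "x2 = cis t2" "x3 = cis t3"
    using \<open>ccw x1 x2 x3\<close> unfolding ccw_def by blast
  define G where "G a b c \<longleftrightarrow> (a \<in> {0..<2*pi} \<and> b \<in> {0..<2*pi} \<and> c \<in> {0..<2*pi} \<longrightarrow> maslov (\<phi> (cis a)) (\<phi> (cis b)) (\<phi> (cis c))
    = int CARD('n) * beta1 (cis a) (cis b) (cis c))" for a b c
  have G: "AE a in lebesgue. AE b in lebesgue. AE c in lebesgue. G a b c"
    using AE_lebesgue_triple[OF cocycle] by (simp add: G_def)
  have L: "L1 \<in> lagrangians" "L2 \<in> lagrangians" "L3 \<in> lagrangians" using ess ess_graphD(1) by auto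
  define \<mu> where "\<mu> = min (t2 - t1) (min (t3 - t2) (t1 + 2 * pi - t3)) / 4"
  have \<mu>: "0 < \<mu>" "4 * \<mu> \<le> t2 - t1" "4 * \<mu> \<le> t3 - t2" "4 * \<mu> \<le> t1 + 2 * pi - t3"
    using t by (auto simp: \<mu>_def)
  obtain u u' where "u \<in> {0..<2*pi}" and u: "AE b in lebesgue. AE c in lebesgue. G u b c"
      "\<forall>L\<in>{L1, L2, L3}. \<phi> (cis u) \<inter> L = {0}"
    and u': "cis u' = cis u" "\<bar>u' - (t3 + t1 + 2 * pi) / 2\<bar> < \<mu>"
    by (rule AE_ex_transverse_angle_near[where Ls = "{L1, L2, L3}" and g = "(t3 + t1 + 2 * pi) / 2",
          OF transverse G _ _ \<mu>(1)]) (use L in auto)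
  let ?N = "\<phi> (cis u)"
  have Ls: "finite {?N, L1, L2, L3}" "{?N, L1, L2, L3} \<subseteq> lagrangians"
    using L lagrangian_cis[OF meas] by auto
  obtain c1 c1' where "c1 \<in> {0..<2*pi}" and c1: "AE s in lebesgue. G u c1 s"
      "\<forall>L\<in>{?N, L1, L2, L3}. \<phi> (cis c1) \<inter> L = {0}"
    and c1': "cis c1' = cis c1" "\<bar>c1' - (t1 + t2) / 2\<bar> < \<mu>"
    by (rule AE_ex_transverse_angle_near[where g = "(t1 + t2) / 2", OF transverse u(1) Ls \<mu>(1)]) auto
  obtain c2 c2' where "c2 \<in> {0..<2*pi}" and c2: "AE s in lebesgue. G u c2 s"
      "\<forall>L\<in>{?N, L1, L2, L3}. \<phi> (cis c2) \<inter> L = {0}"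
    and c2': "cis c2' = cis c2" "\<bar>c2' - (t2 + t3) / 2\<bar> < \<mu>"
    by (rule AE_ex_transverse_angle_near[where g = "(t2 + t3) / 2", OF transverse u(1) Ls \<mu>(1)]) auto
  have cocycle_at: "AE t in lebesgue. t \<in> {0..<2*pi} \<longrightarrow>
      maslov ?N (\<phi> (cis c)) (\<phi> (cis t)) = int CARD('n) * beta1 (cis u) (cis c) (cis t)"
    if "c \<in> {0..<2*pi}" "AE s in lebesgue. G u c s" for c
    using that(2) by eventually_elim (use that(1) \<open>u \<in> {0..<2*pi}\<close> in \<open>simp add: G_def\<close>)
  have order: "u' - 2 * pi < t1" "t1 < c1'" "c1' < t2" "t2 < c2'" "c2' < t3" "t3 < u'"
    using \<mu> u'(2) c1'(2) c2'(2) by (auto simp: abs_less_iff field_simps)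
  have NC: "?N \<inter> \<phi> (cis c1) = {0}" "?N \<inter> \<phi> (cis c2) = {0}"
    using c1(2) c2(2) by (auto simp: Int_commute)
  have LN: "L1 \<inter> ?N = {0}" "L2 \<inter> ?N = {0}" "L3 \<inter> ?N = {0}"
    using u(2) by (auto simp: Int_commute)
  have LC: "L1 \<inter> \<phi> (cis c1) = {0}" "L2 \<inter> \<phi> (cis c1) = {0}" "L3 \<inter> \<phi> (cis c1) = {0}"
      "L2 \<inter> \<phi> (cis c2) = {0}" "L3 \<inter> \<phi> (cis c2) = {0}"
    using c1(2) c2(2) by (auto simp: Int_commute)
  show ?thesis
    using maslov_eq_card_of_generic_angles[where u = u' and v = c1' and w = c2',
        unfolded u'(1) c1'(1) c2'(1), OF meas ess[unfolded x] order NC LN LC transverse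
        cocycle_at[OF \<open>c1 \<in> {0..<2*pi}\<close> c1(1)] cocycle_at[OF \<open>c2 \<in> {0..<2*pi}\<close> c2(1)]] .
qed

theorem corollary8p5:
  fixes G :: "(complex \<times> complex) set"
    and \<rho> :: "complex \<times> complex \<Rightarrow> 'n::finite sympl \<Rightarrow> 'n sympl"
    and \<phi> :: "complex \<Rightarrow> 'n sympl set"
  assumes "tf_cocompact_lattice G"
    and "is_rep G \<rho>"
    and "lag_measurable \<phi>"
    and "\<forall>g\<in>G. \<forall>x\<in>sphere 0 1. \<phi> (mob g x) = \<rho> g ` \<phi> x"
    and "AE p in lebesgue. p \<in> {0..<2*pi} \<times> {0..<2*pi} \<times> {0..<2*pi} \<longrightarrow>
           maslov (\<phi> (cis (fst p))) (\<phi> (cis (fst (snd p)))) (\<phi> (cis (snd (snd p))))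
             = int CARD('n) * beta1 (cis (fst p)) (cis (fst (snd p))) (cis (snd (snd p)))"
    and "\<forall>L\<in>lagrangians. AE t in lebesgue. t \<in> {0..<2*pi} \<longrightarrow> \<phi> (cis t) \<inter> L = {0}"
  shows "\<forall>x1 L1 x2 L2 x3 L3. (x1, L1) \<in> ess_graph \<phi> \<and> (x2, L2) \<in> ess_graph \<phi> \<and>
           (x3, L3) \<in> ess_graph \<phi> \<and> x1 \<noteq> x2 \<and> x2 \<noteq> x3 \<and> x1 \<noteq> x3 \<longrightarrow>
           maslov L1 L2 L3 = int CARD('n) * beta1 x1 x2 x3"
proof (intro allI impI, elim conjE)
  fix x1 L1 x2 L2 x3 L3
  assume ess: "(x1, L1) \<in> ess_graph \<phi>" "(x2, L2) \<in> ess_graph \<phi>" "(x3, L3) \<in> ess_graph \<phi>"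
    and distinct: "x1 \<noteq> x2" "x2 \<noteq> x3" "x1 \<noteq> x3"
  note maslov_ccw = maslov_ess_graph_ccw[OF assms(3,5,6)]
  show "maslov L1 L2 L3 = int CARD('n) * beta1 x1 x2 x3"
  proof (cases "ccw x1 x2 x3")
    case True
    then show ?thesis using maslov_ccw[OF ess] distinct by (simp add: beta1_def)
  next
    case False
    then have "ccw x3 x2 x1" using ccw_or_ccw_rev ess_graphD(2)[OF ess(1)] ess_graphD(2)[OF ess(2)]
        ess_graphD(2)[OF ess(3)] distinct by blast
    then have "maslov L1 L2 L3 = - int CARD('n)"
      using maslov_ccw[OF ess(3,2,1)] maslov_antisym[of L1 L2 L3] by simp
    then show ?thesis using False \<open>ccw x3 x2 x1\<close> distinct by (simp add: beta1_def)
  qed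
qed

end
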